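(* Let $H$ be a separable Hilbert space, let $h$ and $k$ be self-adjoint operators on $H$, and let $w_{h,k}\colon\mathbb{R}\to\mathcal{B}(H)$, $w_{h,k}(t)=e^{ith}e^{-itk}$. Consider the statements: (a) $w_{h,k}$ is differentiable at $0$ in the norm topology of $\mathcal{B}(H)$; (b) $w_{h,k}$ is strongly differentiable at $0$, i.e. $t\mapsto e^{ith}e^{-itk}\xi$ is differentiable at $0$ for every $\xi\in H$; (c) $\mathrm{dom}(h)=\mathrm{dom}(k)$ and $h-k$ is bounded on this common domain; (d) $H$ contains a dense subspace $D\subseteq\mathrm{dom}(h)\cap\mathrm{dom}(k)$ such that $h-k$ is bounded on $D$ and $e^{itk}D\subseteq D$ for all $t\in\mathbb{R}$; (e) $w_{h,k}$ is Lipschitz continuous (in operator norm). Then (a) implies (b), (b) implies (c), (c) implies (d), and (d) implies (e). *)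

theory Defs
  imports "HOL-Analysis.Analysis"
begin

text \<open>A complex inner product space is presented as a real inner product space
  together with a complex scalar multiplication extending the real one, such that
  multiplication by the imaginary unit is orthogonal. The real inner product is the
  real part of the complex inner product; the complex inner product (conjugate-linear
  in the first argument) is recovered as cinner below.\<close>

class complex_inner = real_inner +
  fixes scaleC :: "complex \<Rightarrow> 'a \<Rightarrow> 'a" (infixr \<open>*\<^sub>C\<close> 75)
  assumes scaleC_add_right: "a *\<^sub>C (x + y) = a *\<^sub>C x + a *\<^sub>C y"
    and scaleC_add_left: "(a + b) *\<^sub>C x = a *\<^sub>C x + b *\<^sub>C x"
    and scaleC_scaleC: "a *\<^sub>C (b *\<^sub>C x) = (a * b) *\<^sub>C x"
    and scaleC_one: "1 *\<^sub>C x = x"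
    and scaleC_of_real: "complex_of_real r *\<^sub>C x = r *\<^sub>R x"
    and inner_scaleC_ii: "inner (\<i> *\<^sub>C x) (\<i> *\<^sub>C y) = inner x y"

text \<open>Complex inner product, linear in the second and conjugate-linear in the first argument.\<close>
definition cinner :: "'a::complex_inner \<Rightarrow> 'a \<Rightarrow> complex" where
  "cinner x y = Complex (inner x y) (- inner x (\<i> *\<^sub>C y))"

definition separable_space :: "'a::metric_space itself \<Rightarrow> bool" where
  "separable_space _ \<longleftrightarrow> (\<exists>S::'a set. countable S \<and> closure S = UNIV)"

definition csubspace :: "'a::complex_inner set \<Rightarrow> bool" where
  "csubspace S \<longleftrightarrow> 0 \<in> S \<and> (\<forall>x\<in>S. \<forall>y\<in>S. x + y \<in> S) \<and> (\<forall>a. \<forall>x\<in>S. a *\<^sub>C x \<in> S)"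

text \<open>An operator is given by its domain D and a function h (values outside D are irrelevant).\<close>

definition clinear_on :: "'a::complex_inner set \<Rightarrow> ('a \<Rightarrow> 'a) \<Rightarrow> bool" where
  "clinear_on D h \<longleftrightarrow> csubspace D \<and>
     (\<forall>x\<in>D. \<forall>y\<in>D. h (x + y) = h x + h y) \<and> (\<forall>a. \<forall>x\<in>D. h (a *\<^sub>C x) = a *\<^sub>C h x)"

definition adjoint_dom :: "'a::complex_inner set \<Rightarrow> ('a \<Rightarrow> 'a) \<Rightarrow> 'a set" where
  "adjoint_dom D h = {y. \<exists>z. \<forall>x\<in>D. cinner (h x) y = cinner x z}"

text \<open>(D, h) is self-adjoint: densely defined, linear, symmetric, and the adjoint has
  the same domain (hence equals h, by density).\<close>
definition self_adjoint_op :: "'a::complex_inner set \<Rightarrow> ('a \<Rightarrow> 'a) \<Rightarrow> bool" where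
  "self_adjoint_op D h \<longleftrightarrow> clinear_on D h \<and> closure D = UNIV \<and>
     (\<forall>x\<in>D. \<forall>y\<in>D. cinner (h x) y = cinner x (h y)) \<and> adjoint_dom D h = D"

definition unitary_op :: "('a::complex_inner \<Rightarrow>\<^sub>L 'a) \<Rightarrow> bool" where
  "unitary_op U \<longleftrightarrow> (\<forall>a x. U (a *\<^sub>C x) = a *\<^sub>C U x) \<and> (\<forall>x. norm (U x) = norm x)
     \<and> surj (blinfun_apply U)"

definition unitary_group :: "(real \<Rightarrow> ('a::complex_inner \<Rightarrow>\<^sub>L 'a)) \<Rightarrow> bool" where
  "unitary_group U \<longleftrightarrow> (\<forall>t. unitary_op (U t)) \<and> U 0 = id_blinfun \<and>
     (\<forall>s t. U (s + t) = U s o\<^sub>L U t) \<and> (\<forall>x. continuous_on UNIV (\<lambda>t. U t x))"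

text \<open>U is generated by (D, h) in the sense of Stone's theorem: D is exactly the set of
  vectors x for which t \<mapsto> U t x is differentiable at 0, and the derivative there is i h x.
  (So U t = e^{ith}.)\<close>
definition generated_by :: "(real \<Rightarrow> ('a::complex_inner \<Rightarrow>\<^sub>L 'a)) \<Rightarrow> 'a set \<Rightarrow> ('a \<Rightarrow> 'a) \<Rightarrow> bool" where
  "generated_by U D h \<longleftrightarrow>
     D = {x. (\<lambda>t. U t x) differentiable (at 0)} \<and>
     (\<forall>x\<in>D. ((\<lambda>t. U t x) has_vector_derivative (\<i> *\<^sub>C h x)) (at 0))"

text \<open>e^{ith}, defined as the (by Stone's theorem unique) strongly continuous unitary group
  generated by the self-adjoint operator (D, h).\<close>
definition exp_ith :: "'a::complex_inner set \<Rightarrow> ('a \<Rightarrow> 'a) \<Rightarrow> real \<Rightarrow> ('a \<Rightarrow>\<^sub>L 'a)" where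
  "exp_ith D h = (THE U. unitary_group U \<and> generated_by U D h)"

definition w_op :: "'a::complex_inner set \<Rightarrow> ('a \<Rightarrow> 'a) \<Rightarrow> 'a set \<Rightarrow> ('a \<Rightarrow> 'a) \<Rightarrow> real \<Rightarrow> ('a \<Rightarrow>\<^sub>L 'a)" where
  "w_op Dh h Dk k t = exp_ith Dh h t o\<^sub>L exp_ith Dk k (- t)"

end

(* The operators e^{ith} of the statement are characterised only as the unique strongly
   continuous unitary group generated by h, so Stone's theorem has to be supplied. Existence:
   with A = ih skew-adjoint and c = n + 1, the Yosida approximants B_n = c^2 A (c^2 - A^2)^-1
   are bounded and skew, their exponentials are isometries, and e^{tB_n} converges strongly,
   locally uniformly in t, to a unitary group whose generator is A. Uniqueness: on dom h the
   difference of two such groups solves e' = A e, so its norm is constant, hence zero.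

   For the implications write w t = e^{ith} e^{-itk}. (a) => (b): evaluate the derivative at
   a vector. (b) => (c): for x in dom k, e^{ith} x = w t (e^{itk} x) is differentiable by a
   product rule for strongly differentiable contractions, so x is in dom h, and symmetrically;
   on the common domain ih - ik = w'(0), which is bounded by the uniform boundedness principle
   applied to the difference quotients. (c) => (d) with D = dom h, which e^{itk} preserves.
   (d) => (e): for x in D the derivative of w t x is e^{ith} i(h - k) e^{-itk} x, of norm at most
   C |x|, so w is C-Lipschitz on D and, by density, in operator norm. *)

theory Submission
  imports Defs
begin

section \<open>Complex scalar multiplication\<close>

declare scaleC_of_real [simp]

lemma scaleC_zero_right [simp]: "a *\<^sub>C (0::'a::complex_inner) = 0"
  using scaleC_add_right[of a 0 0] by simp

lemma scaleC_minus_right: "a *\<^sub>C (- x::'a::complex_inner) = - (a *\<^sub>C x)"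
  using scaleC_add_right[of a x "- x"] by (simp add: eq_neg_iff_add_eq_0 add.commute)

lemma scaleC_diff_right: "a *\<^sub>C (x - y::'a::complex_inner) = a *\<^sub>C x - a *\<^sub>C y"
  using scaleC_add_right[of a x "- y"] by (simp add: scaleC_minus_right)

lemma scaleC_scaleR_right: "a *\<^sub>C (r *\<^sub>R x::'a::complex_inner) = r *\<^sub>R (a *\<^sub>C x)"
  by (metis scaleC_of_real scaleC_scaleC mult.commute)

lemma scaleC_ii_ii [simp]: "\<i> *\<^sub>C \<i> *\<^sub>C (x::'a::complex_inner) = - x"
proof -
  have "\<i> *\<^sub>C \<i> *\<^sub>C x = complex_of_real (- 1) *\<^sub>C x"
    by (simp only: scaleC_scaleC) simp
  also have "\<dots> = - x"
    by (simp only: scaleC_of_real) simp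
  finally show ?thesis .
qed

lemma inner_scaleC_ii_left: "inner (\<i> *\<^sub>C x) (y::'a::complex_inner) = - inner x (\<i> *\<^sub>C y)"
  using inner_scaleC_ii[of "\<i> *\<^sub>C x" y] by simp

lemma norm_scaleC_ii [simp]: "norm (\<i> *\<^sub>C (x::'a::complex_inner)) = norm x"
  by (simp add: norm_eq_sqrt_inner inner_scaleC_ii)

lemma bounded_linear_scaleC_ii: "bounded_linear (\<lambda>x::'a::complex_inner. \<i> *\<^sub>C x)"
  by (rule bounded_linear_intro[where K=1]) (simp_all add: scaleC_add_right scaleC_scaleR_right)

lemma scaleC_ii_cancel: "\<i> *\<^sub>C x = \<i> *\<^sub>C y \<longleftrightarrow> x = (y::'a::complex_inner)"
  by (metis scaleC_ii_ii neg_equal_iff_equal)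

lemma scaleC_eq_Re_Im: "a *\<^sub>C (x::'a::complex_inner) = Re a *\<^sub>R x + Im a *\<^sub>R (\<i> *\<^sub>C x)"
proof -
  have "a = complex_of_real (Re a) + complex_of_real (Im a) * \<i>"
    by (simp add: complex_eq_iff)
  then have "a *\<^sub>C x = (complex_of_real (Re a) + complex_of_real (Im a) * \<i>) *\<^sub>C x"
    by simp
  also have "\<dots> = Re a *\<^sub>R x + Im a *\<^sub>R (\<i> *\<^sub>C x)"
    by (simp only: scaleC_add_left scaleC_scaleC[symmetric] scaleC_of_real)
  finally show ?thesis .
qed

section \<open>An algebra of bounded operators\<close>

text \<open>Exponentials need a \<open>real_normed_algebra_1\<close>, but the bounded operators on a trivial
  space violate \<open>0 \<noteq> 1\<close>. We therefore pair each operator with a real scalar under the max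
  norm; only the operator component is ever applied to vectors.\<close>

typedef (overloaded) 'a endo = "UNIV :: (('a::real_normed_vector \<Rightarrow>\<^sub>L 'a) \<times> real) set"
  by simp

setup_lifting type_definition_endo

instantiation endo :: (real_normed_vector) real_vector
begin
lift_definition zero_endo :: "'a endo" is "0" .
lift_definition plus_endo :: "'a endo \<Rightarrow> 'a endo \<Rightarrow> 'a endo" is "(+)" .
lift_definition minus_endo :: "'a endo \<Rightarrow> 'a endo \<Rightarrow> 'a endo" is "(-)" .
lift_definition uminus_endo :: "'a endo \<Rightarrow> 'a endo" is "uminus" .
lift_definition scaleR_endo :: "real \<Rightarrow> 'a endo \<Rightarrow> 'a endo" is "scaleR" .
instance
  by standard (transfer; simp add: algebra_simps)+
end

instantiation endo :: (real_normed_vector) real_normed_vector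
begin
lift_definition norm_endo :: "'a endo \<Rightarrow> real" is "\<lambda>(A, r). max (norm A) \<bar>r\<bar>" .
definition dist_endo :: "'a endo \<Rightarrow> 'a endo \<Rightarrow> real" where "dist_endo X Y = norm (X - Y)"
definition sgn_endo :: "'a endo \<Rightarrow> 'a endo" where "sgn_endo X = X /\<^sub>R norm X"
definition uniformity_endo :: "('a endo \<times> 'a endo) filter" where
  "uniformity_endo = (INF e\<in>{0<..}. principal {(X, Y). dist X Y < e})"
definition open_endo :: "'a endo set \<Rightarrow> bool" where
  "open_endo S = (\<forall>X\<in>S. \<forall>\<^sub>F (X', Y) in uniformity. X' = X \<longrightarrow> Y \<in> S)"
instance
proof
  fix X Y :: "'a endo" and a :: real
  show "norm X = 0 \<longleftrightarrow> X = 0"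
    by transfer (auto simp: max_def zero_prod_def split: if_splits)
  show "norm (X + Y) \<le> norm X + norm Y"
  proof transfer
    fix p q :: "('a \<Rightarrow>\<^sub>L 'a) \<times> real"
    obtain A r B s where pq: "p = (A, r)" "q = (B, s)" by fastforce
    have "norm (A + B) \<le> norm A + norm B" "\<bar>r + s\<bar> \<le> \<bar>r\<bar> + \<bar>s\<bar>"
      by (rule norm_triangle_ineq abs_triangle_ineq)+
    then show "(case p + q of (A, r) \<Rightarrow> max (norm A) \<bar>r\<bar>)
      \<le> (case p of (A, r) \<Rightarrow> max (norm A) \<bar>r\<bar>) + (case q of (A, r) \<Rightarrow> max (norm A) \<bar>r\<bar>)"
      by (simp add: pq) linarith
  qed
  show "norm (a *\<^sub>R X) = \<bar>a\<bar> * norm X"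
    by transfer (auto simp: max_mult_distrib_left abs_mult)
qed (simp_all add: dist_endo_def sgn_endo_def uniformity_endo_def open_endo_def)
end

instantiation endo :: (real_normed_vector) real_normed_algebra_1
begin
lift_definition times_endo :: "'a endo \<Rightarrow> 'a endo \<Rightarrow> 'a endo" is
  "\<lambda>(A, r) (B, s). (A o\<^sub>L B, r * s)" .
lift_definition one_endo :: "'a endo" is "(id_blinfun, 1)" .
instance
proof
  fix X Y :: "'a endo"
  show "norm (X * Y) \<le> norm X * norm Y"
  proof transfer
    fix p q :: "('a \<Rightarrow>\<^sub>L 'a) \<times> real"
    obtain A r B s where pq: "p = (A, r)" "q = (B, s)" by fastforce
    have "norm (A o\<^sub>L B) \<le> max (norm A) \<bar>r\<bar> * max (norm B) \<bar>s\<bar>"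
      by (rule order_trans[OF norm_blinfun_compose]) (intro mult_mono; simp)
    moreover have "\<bar>r * s\<bar> \<le> max (norm A) \<bar>r\<bar> * max (norm B) \<bar>s\<bar>"
      unfolding abs_mult by (intro mult_mono) auto
    ultimately show "(case (case p of (A, r) \<Rightarrow> \<lambda>(B, s). (A o\<^sub>L B, r * s)) q of
        (A, r) \<Rightarrow> max (norm A) \<bar>r\<bar>)
      \<le> (case p of (A, r) \<Rightarrow> max (norm A) \<bar>r\<bar>) * (case q of (A, r) \<Rightarrow> max (norm A) \<bar>r\<bar>)"
      by (simp add: pq)
  qed
qed (transfer; auto intro!: blinfun_eqI simp: zero_prod_def max_def norm_blinfun_id_le
      blinfun.bilinear_simps algebra_simps)+
end

definition endo_op :: "'a::real_normed_vector endo \<Rightarrow> 'a \<Rightarrow>\<^sub>L 'a" where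
  "endo_op X = fst (Rep_endo X)"

definition endo_of :: "('a::real_normed_vector \<Rightarrow>\<^sub>L 'a) \<Rightarrow> 'a endo" where
  "endo_of A = Abs_endo (A, 0)"

lemma endo_op_simps [simp]:
  "endo_op (X * Y) x = endo_op X (endo_op Y x)"
  "endo_op 1 x = x"
  "endo_op 0 x = 0"
  "endo_op (X + Y) x = endo_op X x + endo_op Y x"
  "endo_op (X - Y) x = endo_op X x - endo_op Y x"
  "endo_op (- X) x = - endo_op X x"
  "endo_op (r *\<^sub>R X) x = r *\<^sub>R endo_op X x"
  "endo_op (endo_of A) = A"
  unfolding endo_op_def endo_of_def
  by (transfer; auto simp: zero_prod_def blinfun.bilinear_simps split: prod.splits)+

lemma endo_of_compose: "endo_of (A o\<^sub>L B) = endo_of A * endo_of B"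
  unfolding endo_of_def by transfer simp

lemma norm_endo_op_le: "norm (endo_op X) \<le> norm X"
  unfolding endo_op_def by transfer auto

lemma bounded_linear_endo_apply: "bounded_linear (\<lambda>X. blinfun_apply (endo_op X) x)"
proof (rule bounded_linear_intro[where K="norm x"])
  fix X :: "'a endo"
  have "norm (endo_op X x) \<le> norm (endo_op X) * norm x"
    by (rule norm_blinfun)
  also have "\<dots> \<le> norm X * norm x"
    by (rule mult_right_mono[OF norm_endo_op_le]) simp
  finally show "norm (endo_op X x) \<le> norm X * norm x" .
qed (simp_all add: blinfun.bilinear_simps)

lemma has_vector_derivative_endo_apply:
  "(f has_vector_derivative f') F \<Longrightarrow>
    ((\<lambda>t. endo_op (f t) x) has_vector_derivative endo_op f' x) F"
  by (rule bounded_linear.has_vector_derivative[OF bounded_linear_endo_apply])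

text \<open>The library proves completeness of \<open>'a \<Rightarrow>\<^sub>L 'b\<close> only for \<open>'b :: banach\<close>; the sort
  \<open>{real_normed_vector, complete_space}\<close> of the theorem is not below that class, so the
  argument is repeated here.\<close>

lemma Cauchy_blinfun_apply:
  fixes X :: "nat \<Rightarrow> 'a::real_normed_vector \<Rightarrow>\<^sub>L 'b::real_normed_vector"
  assumes "Cauchy X"
  shows "Cauchy (\<lambda>n. X n x)"
proof (rule metric_CauchyI)
  fix e :: real
  assume "e > 0"
  then obtain M where M: "\<forall>m\<ge>M. \<forall>n\<ge>M. dist (X m) (X n) < e / (norm x + 1)"
    using metric_CauchyD[OF assms, of "e / (norm x + 1)"] by (auto simp: add_nonneg_pos)
  have "dist (X m x) (X n x) < e" if "m \<ge> M" "n \<ge> M" for m n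
  proof -
    have "dist (X m) (X n) < e / (norm x + 1)"
      using M that by blast
    have "dist (X m x) (X n x) \<le> dist (X m) (X n) * norm x"
      using norm_blinfun[of "X m - X n" x] by (simp add: dist_norm blinfun.bilinear_simps)
    also have "\<dots> \<le> e / (norm x + 1) * norm x"
      using \<open>dist (X m) (X n) < e / (norm x + 1)\<close> by (intro mult_right_mono) simp_all
    also have "\<dots> < e"
    proof -
      have "e * norm x < e * (norm x + 1)" "norm x + 1 > 0"
        using \<open>e > 0\<close> by (simp_all add: add_nonneg_pos)
      then show ?thesis
        by (simp add: divide_less_eq mult.commute)
    qed
    finally show ?thesis .
  qed
  then show "\<exists>M. \<forall>m\<ge>M. \<forall>n\<ge>M. dist (X m x) (X n x) < e"
    by blast
qed

lemma bounded_linear_pointwise_limit: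
  fixes X :: "nat \<Rightarrow> 'a::real_normed_vector \<Rightarrow>\<^sub>L 'b::real_normed_vector"
  assumes K: "\<And>n. norm (X n) \<le> K" and v: "\<And>x. (\<lambda>n. X n x) \<longlonglongrightarrow> v x"
  shows "bounded_linear v"
proof (rule bounded_linear_intro[where K=K])
  show "v (x + y) = v x + v y" "v (r *\<^sub>R x) = r *\<^sub>R v x" for x y r
    using tendsto_add[OF v[of x] v[of y]] v[of "x + y"] tendsto_scaleR[OF tendsto_const v[of x]]
      v[of "r *\<^sub>R x"]
    by (simp_all add: blinfun.bilinear_simps LIMSEQ_unique)
  show "norm (v x) \<le> norm x * K" for x
    by (rule tendsto_le[OF _ tendsto_const tendsto_norm[OF v]])
      (auto intro!: always_eventually order.trans[OF norm_blinfun] mult_right_mono K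
        simp: mult.commute)
qed

lemma Cauchy_blinfun_convergent:
  fixes X :: "nat \<Rightarrow> 'a::real_normed_vector \<Rightarrow>\<^sub>L 'b::{real_normed_vector,complete_space}"
  assumes "Cauchy X"
  shows "convergent X"
proof -
  obtain v where v: "\<And>x. (\<lambda>n. X n x) \<longlonglongrightarrow> v x"
    using Cauchy_blinfun_apply[OF assms] unfolding Cauchy_convergent_iff convergent_def by metis
  obtain K where "\<And>n. norm (X n) \<le> K"
    using Cauchy_Bseq[OF assms] unfolding Bseq_def by blast
  then have "bounded_linear v"
    using v by (rule bounded_linear_pointwise_limit)
  have "X \<longlonglongrightarrow> Blinfun v"
  proof (rule LIMSEQ_I)
    fix r :: real
    assume "r > 0"
    then obtain M where M: "\<forall>m\<ge>M. \<forall>n\<ge>M. dist (X m) (X n) < r / 2"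
      using metric_CauchyD[OF assms, of "r / 2"] by auto
    have "norm (X n - Blinfun v) \<le> r / 2" if "n \<ge> M" for n
    proof (rule norm_blinfun_bound)
      fix x
      have "norm (X n x - X m x) \<le> r / 2 * norm x" if "m \<ge> M" for m
      proof -
        have "dist (X n) (X m) < r / 2"
          using M \<open>n \<ge> M\<close> that by blast
        then have "norm (X n - X m) * norm x \<le> r / 2 * norm x"
          by (intro mult_right_mono) (auto simp: dist_norm)
        with norm_blinfun[of "X n - X m" x] show ?thesis
          by (simp add: blinfun.bilinear_simps)
      qed
      then have "norm (X n x - v x) \<le> r / 2 * norm x"
        by (intro tendsto_le[OF _ tendsto_const tendsto_norm[OF tendsto_diff[OF tendsto_const v]]])
          (auto simp: eventually_sequentially)
      then show "norm ((X n - Blinfun v) x) \<le> r / 2 * norm x"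
        by (simp add: blinfun.bilinear_simps bounded_linear_Blinfun_apply \<open>bounded_linear v\<close>)
    qed (use \<open>r > 0\<close> in simp)
    then have "norm (X n - Blinfun v) < r" if "n \<ge> M" for n
      using that \<open>r > 0\<close> by fastforce
    then show "\<exists>M. \<forall>n\<ge>M. norm (X n - Blinfun v) < r"
      by blast
  qed
  then show ?thesis
    by (auto simp: convergent_def)
qed

lemma norm_endo_eq: "norm X = max (norm (endo_op X)) \<bar>snd (Rep_endo X)\<bar>"
  by (simp add: norm_endo.rep_eq endo_op_def case_prod_unfold)

instance endo :: ("{real_normed_vector,complete_space}") banach
proof
  fix X :: "nat \<Rightarrow> 'a endo"
  assume "Cauchy X"
  have "bounded_linear (\<lambda>X. endo_op (X :: 'a endo))"
    by (rule bounded_linear_intro[where K=1])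
      (simp_all add: endo_op_def plus_endo.rep_eq scaleR_endo.rep_eq norm_endo_eq)
  moreover have "bounded_linear (\<lambda>X. snd (Rep_endo (X :: 'a endo)))"
    by (rule bounded_linear_intro[where K=1])
      (simp_all add: plus_endo.rep_eq scaleR_endo.rep_eq norm_endo_eq)
  ultimately have "Cauchy (\<lambda>n. endo_op (X n))" "Cauchy (\<lambda>n. snd (Rep_endo (X n)))"
    using bounded_linear.Cauchy \<open>Cauchy X\<close> by blast+
  then obtain A r where A: "(\<lambda>n. endo_op (X n)) \<longlonglongrightarrow> A" and r: "(\<lambda>n. snd (Rep_endo (X n))) \<longlonglongrightarrow> r"
    using Cauchy_blinfun_convergent Cauchy_convergent_iff by (metis convergent_def)
  have "\<forall>n. norm (dist (X n) (Abs_endo (A, r)))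
      \<le> dist (endo_op (X n)) A + dist (snd (Rep_endo (X n))) r"
    by (simp add: dist_norm norm_endo_eq endo_op_def minus_endo.rep_eq Abs_endo_inverse)
  moreover have "(\<lambda>n. dist (endo_op (X n)) A + dist (snd (Rep_endo (X n))) r) \<longlonglongrightarrow> 0"
    using tendsto_add[OF A[THEN tendsto_dist_iff[THEN iffD1]] r[THEN tendsto_dist_iff[THEN iffD1]]]
    by simp
  ultimately have "(\<lambda>n. dist (X n) (Abs_endo (A, r))) \<longlonglongrightarrow> 0"
    by (rule Lim_null_comparison[OF always_eventually])
  then have "X \<longlonglongrightarrow> Abs_endo (A, r)"
    by (rule tendsto_dist_iff[THEN iffD2])
  then show "convergent X"
    by (auto simp: convergent_def)
qed

lemma exp_mult_commute:
  fixes X Y :: "'a::{real_normed_algebra_1,banach}"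
  assumes "X * Y = Y * X"
  shows "exp X * Y = Y * exp X"
proof -
  have "X ^ n * Y = Y * X ^ n" for n
    using assms by (rule power_commuting_commutes)
  then show ?thesis
    by (simp add: exp_def suminf_mult[symmetric] summable_exp_generic suminf_mult2)
qed

lemma commute_scaleR_mult_diff:
  fixes Z P Q :: "'b::real_normed_algebra"
  assumes "Z * P = P * Z" "Z * Q = Q * Z"
  shows "Z * (a *\<^sub>R (b *\<^sub>R (P * Q) - Q)) = (a *\<^sub>R (b *\<^sub>R (P * Q) - Q)) * Z"
proof -
  have "Z * (P * Q) = (P * Q) * Z"
    by (metis assms mult.assoc)
  then show ?thesis
    by (simp add: algebra_simps assms(2))
qed

lemma dense_imp_closed_property:
  assumes "closure S = UNIV" and "closed {x. P x}" and "\<forall>x\<in>S. P x"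
  shows "P x"
proof -
  have "closure S \<subseteq> {x. P x}"
    using assms(2,3) by (intro closure_minimal) auto
  then show ?thesis
    using assms(1) by auto
qed

lemma norm_triangle_add3: "norm (a + b + c) \<le> norm a + norm b + norm c"
  for a b c :: "'a::real_normed_vector"
  by (metis add_right_mono norm_triangle_ineq order_trans)

lemma norm_triangle_add4: "norm (a + b + c + d) \<le> norm a + norm b + norm c + norm d"
  for a b c d :: "'a::real_normed_vector"
  by (metis add_right_mono norm_triangle_ineq order_trans)

lemma parallelogram_midpoint_le:
  fixes y a b :: "'a::real_inner"
  assumes "0 \<le> d" and "d \<le> norm (y - (1/2) *\<^sub>R (a + b))"
  shows "norm (a - b)^2 \<le> 2 * norm (y - a)^2 + 2 * norm (y - b)^2 - 4 * d^2"
proof -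
  have "(y - a) + (y - b) = 2 *\<^sub>R (y - (1/2) *\<^sub>R (a + b))"
    by (simp add: algebra_simps scaleR_2)
  then have "2 * d \<le> norm ((y - a) + (y - b))"
    using assms(2) by simp
  then have "(2 * d)^2 \<le> norm ((y - a) + (y - b))^2"
    using assms(1) by (intro power_mono) auto
  moreover have "norm ((y - a) + (y - b))^2 + norm (a - b)^2
      = 2 * norm (y - a)^2 + 2 * norm (y - b)^2"
    by (simp add: power2_norm_eq_inner inner_add inner_diff inner_commute algebra_simps)
  ultimately show ?thesis
    by (simp add: power_mult_distrib)
qed

lemma minimizing_sequence_Cauchy:
  fixes s :: "nat \<Rightarrow> 'a::real_inner"
  assumes mid: "\<And>m n. norm (s m - s n)^2 \<le> 2 * norm (y - s m)^2 + 2 * norm (y - s n)^2 - 4 * d^2"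
    and s: "\<And>n. norm (y - s n) < d + 1 / Suc n"
  shows "Cauchy s"
proof (rule metric_CauchyI)
  fix e :: real
  assume "e > 0"
  define g where "g N = 8 * d * (1 / Suc N) + 4 * (1 / Suc N)^2" for N :: nat
  have "g \<longlonglongrightarrow> 8 * d * 0 + 4 * 0^2"
    unfolding g_def by (intro tendsto_intros lim_1_over_n[THEN LIMSEQ_Suc])
  then have "eventually (\<lambda>N. g N < e^2) sequentially"
    using \<open>e > 0\<close> by (intro order_tendstoD(2)) auto
  then obtain N where "\<forall>n\<ge>N. g n < e^2"
    unfolding eventually_sequentially by blast
  then have N: "g N < e^2"
    by simp
  have bound: "norm (y - s k)^2 \<le> (d + 1 / Suc N)^2" if "N \<le> k" for k
  proof -
    have "1 / real (Suc k) \<le> 1 / Suc N"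
      using that by (simp add: frac_le)
    then show ?thesis
      using s[of k] by (intro power_mono) auto
  qed
  have "dist (s m) (s n) < e" if "N \<le> m" "N \<le> n" for m n
  proof -
    have "norm (s m - s n)^2 \<le> 2 * (d + 1 / Suc N)^2 + 2 * (d + 1 / Suc N)^2 - 4 * d^2"
      using mid[of m n] bound[OF that(1)] bound[OF that(2)] by linarith
    also have "\<dots> = g N"
      by (simp add: g_def power2_eq_square algebra_simps)
    finally have "norm (s m - s n)^2 < e^2"
      using N by linarith
    then show ?thesis
      using \<open>e > 0\<close> by (simp add: dist_norm power_less_imp_less_base)
  qed
  then show "\<exists>N. \<forall>m\<ge>N. \<forall>n\<ge>N. dist (s m) (s n) < e"
    by blast
qed

lemma nearest_point_in_closed_subspace:
  fixes y :: "'a::{real_inner, complete_space}"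
  assumes closed: "closed M" and M: "subspace M"
  obtains p where "p \<in> M" and "\<And>m. m \<in> M \<Longrightarrow> norm (y - p) \<le> norm (y - m)"
proof -
  define d where "d = Inf ((\<lambda>m. norm (y - m)) ` M)"
  have bdd: "bdd_below ((\<lambda>m. norm (y - m)) ` M)"
    by (auto intro: bdd_belowI[of _ 0])
  have d_le: "d \<le> norm (y - m)" if "m \<in> M" for m
    unfolding d_def using bdd that by (auto intro: cInf_lower)
  have "d \<ge> 0"
    unfolding d_def using subspace_0[OF M] by (auto intro: cInf_greatest)
  have "\<exists>m\<in>M. norm (y - m) < d + 1 / Suc n" for n :: nat
    using subspace_0[OF M] cInf_less_iff[OF _ bdd, of "d + 1 / Suc n"] by (auto simp: d_def)
  then obtain s where sM: "\<And>n. s n \<in> M" and s: "\<And>n. norm (y - s n) < d + 1 / Suc n"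
    by metis
  have "(1/2) *\<^sub>R (s m + s n) \<in> M" for m n
    using M sM by (simp add: subspace_add subspace_scale)
  then have "Cauchy s"
    using parallelogram_midpoint_le[OF \<open>d \<ge> 0\<close> d_le] s by (intro minimizing_sequence_Cauchy) blast+
  then obtain p where sp: "s \<longlonglongrightarrow> p"
    by (auto simp: Cauchy_convergent_iff convergent_def)
  have "p \<in> M"
    using closed sM sp closed_sequentially by blast
  moreover have "norm (y - p) \<le> d"
  proof (rule tendsto_le[OF _ _ tendsto_norm[OF tendsto_diff[OF tendsto_const sp]]])
    show "(\<lambda>n. d + 1 / Suc n) \<longlonglongrightarrow> d"
      using tendsto_add[OF tendsto_const lim_1_over_n[THEN LIMSEQ_Suc], of d] by simp
    show "\<forall>\<^sub>F n in sequentially. norm (y - s n) \<le> d + 1 / Suc n"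
      using s by (simp add: less_imp_le)
  qed simp
  ultimately show ?thesis
    using d_le that by fastforce
qed

lemma nearest_point_orthogonal:
  fixes y :: "'a::real_inner"
  assumes M: "subspace M" and "p \<in> M" "m \<in> M"
    and nearest: "\<And>m. m \<in> M \<Longrightarrow> norm (y - p) \<le> norm (y - m)"
  shows "inner (y - p) m = 0"
proof -
  define c where "c = inner (y - p) m"
  define q where "q = norm m ^ 2"
  define t where "t = c / (q + 1)"
  have "q \<ge> 0"
    by (simp add: q_def)
  have "p + t *\<^sub>R m \<in> M"
    using assms by (simp add: subspace_add subspace_scale)
  then have "norm (y - p)^2 \<le> norm ((y - p) - t *\<^sub>R m)^2"
    using nearest by (intro power_mono) (auto simp: algebra_simps)
  also have "\<dots> = norm (y - p)^2 - 2 * t * c + t^2 * q"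
    unfolding power2_norm_eq_inner q_def c_def
    by (simp add: inner_diff_left inner_diff_right inner_commute algebra_simps power2_eq_square)
  finally have "2 * t * c * (q + 1)^2 \<le> t^2 * q * (q + 1)^2"
    by (intro mult_right_mono) auto
  moreover have "q + 1 \<noteq> 0"
    using \<open>q \<ge> 0\<close> by simp
  then have "2 * t * c * (q + 1)^2 = 2 * c^2 * (q + 1)" "t^2 * q * (q + 1)^2 = c^2 * q"
    by (simp_all add: t_def power2_eq_square power_divide)
  ultimately have "2 * c^2 * (q + 1) \<le> c^2 * q"
    by simp
  then have "c^2 * (q + 2) \<le> 0"
    by (simp add: algebra_simps)
  then show ?thesis
    using \<open>q \<ge> 0\<close> by (simp add: c_def mult_le_0_iff)
qed

lemma Baire_closed_cover:
  fixes F :: "nat \<Rightarrow> 'a::{metric_space,complete_space} set"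
  assumes closed: "\<And>m. closed (F m)" and cover: "(\<Union>m. F m) = UNIV"
  obtains m where "interior (F m) \<noteq> {}"
proof (rule ccontr)
  assume "\<not> thesis"
  with that have no_interior: "interior (F m) = {}" for m
    by blast
  have "euclidean interior_of \<Union>(range F) = {}"
  proof (rule Baire_category_alt)
    show "completely_metrizable_space (euclidean :: 'a topology) \<or>
        locally_compact_space (euclidean :: 'a topology) \<and> regular_space (euclidean :: 'a topology)"
      by (simp add: completely_metrizable_space_euclidean)
    show "closedin euclidean T \<and> euclidean interior_of T = {}" if "T \<in> range F" for T
      using that closed no_interior by (auto simp: closed_closedin[symmetric])
  qed simp
  then show False
    using cover by simp
qed

lemma bounded_linear_bound_of_ball:
  fixes f :: "'a::real_normed_vector \<Rightarrow> 'b::real_normed_vector"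
  assumes "bounded_linear f" and "r > 0" and bound: "\<And>x. x \<in> ball x0 r \<Longrightarrow> norm (f x) \<le> c"
  shows "norm (f y) \<le> (4 * c / r) * norm y"
proof (cases "y = 0")
  case True
  then show ?thesis
    using \<open>bounded_linear f\<close> by (simp add: linear_simps)
next
  case False
  define z where "z = (r / (2 * norm y)) *\<^sub>R y"
  have "norm z = r / 2"
    using False \<open>r > 0\<close> by (simp add: z_def)
  then have "norm (f (x0 + z)) \<le> c" "norm (f x0) \<le> c"
    using bound \<open>r > 0\<close> by (auto simp: dist_norm)
  moreover have "norm (f z) \<le> norm (f (x0 + z)) + norm (f x0)"
    using \<open>bounded_linear f\<close> norm_triangle_ineq4[of "f (x0 + z)" "f x0"] by (simp add: linear_simps)
  ultimately have "norm (f z) \<le> 2 * c"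
    by linarith
  moreover have "f z = (r / (2 * norm y)) *\<^sub>R f y"
    using \<open>bounded_linear f\<close> by (simp add: z_def linear_simps)
  ultimately have "r * norm (f y) \<le> 4 * c * norm y"
    using False \<open>r > 0\<close> by (simp add: field_simps)
  then show ?thesis
    using \<open>r > 0\<close> by (simp add: field_simps)
qed

lemma uniform_boundedness:
  fixes S :: "nat \<Rightarrow> 'a::{real_normed_vector,complete_space} \<Rightarrow> 'b::real_normed_vector"
  assumes lin: "\<And>n. bounded_linear (S n)"
    and bounded: "\<And>x. \<exists>B. \<forall>n. norm (S n x) \<le> B"
  shows "\<exists>M. \<forall>n x. norm (S n x) \<le> M * norm x"
proof -
  define F where "F m = {x. \<forall>n. norm (S n x) \<le> real m}" for m :: nat
  have "closed (F m)" for m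
  proof -
    have "F m = (\<Inter>n. {x. norm (S n x) \<le> real m})"
      by (auto simp: F_def)
    moreover have "closed {x. norm (S n x) \<le> real m}" for n
      using lin[of n] by (intro closed_Collect_le continuous_intros) (simp add: linear_continuous_on)
    ultimately show ?thesis
      by auto
  qed
  moreover have "(\<Union>m. F m) = UNIV"
  proof (intro equalityI subsetI)
    fix x
    obtain B where B: "\<forall>n. norm (S n x) \<le> B"
      using bounded by blast
    obtain m :: nat where "B \<le> real m"
      using real_arch_simple by blast
    then show "x \<in> (\<Union>m. F m)"
      using B by (auto simp: F_def intro: order_trans)
  qed simp
  ultimately obtain m where "interior (F m) \<noteq> {}"
    by (rule Baire_closed_cover)
  then obtain x0 where "x0 \<in> interior (F m)"
    by blast
  then obtain r where "r > 0" and "ball x0 r \<subseteq> interior (F m)"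
    using open_contains_ball_eq[OF open_interior] by blast
  then have "ball x0 r \<subseteq> F m"
    using interior_subset by blast
  then have "norm (S n y) \<le> (4 * real m / r) * norm y" for n y
    using lin[of n] \<open>r > 0\<close> by (intro bounded_linear_bound_of_ball) (auto simp: F_def)
  then show ?thesis
    by blast
qed

lemma contractions_tendsto_on_dense:
  fixes T :: "nat \<Rightarrow> 'a::real_normed_vector \<Rightarrow> 'a"
  assumes dense: "closure S = UNIV"
    and contraction: "\<And>n z. norm (T n z) \<le> norm z"
    and diff: "\<And>n x y. T n (x - y) = T n x - T n y"
    and tendsto: "\<And>d. d \<in> S \<Longrightarrow> (\<lambda>n. T n d) \<longlonglongrightarrow> d"
  shows "(\<lambda>n. T n y) \<longlonglongrightarrow> y"
proof (rule LIMSEQ_I)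
  fix e :: real
  assume "e > 0"
  moreover have "\<forall>\<epsilon>>0. \<exists>d\<in>S. dist d y < \<epsilon>"
    using dense closure_approachable[of y S] by simp
  ultimately obtain d where "d \<in> S" and yd: "dist d y < e / 3"
    by (meson zero_less_divide_iff zero_less_numeral)
  then obtain N where N: "\<And>n. n \<ge> N \<Longrightarrow> norm (T n d - d) < e / 3"
    using LIMSEQ_D[OF tendsto[OF \<open>d \<in> S\<close>], of "e / 3"] \<open>e > 0\<close> by auto
  have "norm (T n y - y) < e" if "n \<ge> N" for n
  proof -
    have "T n y - y = T n (y - d) + (T n d - d) + (d - y)"
      by (simp add: diff)
    then have "norm (T n y - y) \<le> norm (T n (y - d)) + norm (T n d - d) + norm (d - y)"
      by (simp only: norm_triangle_add3)
    also have "\<dots> < e / 3 + e / 3 + e / 3"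
      using contraction[of n "y - d"] N[OF that] yd by (simp add: dist_norm norm_minus_commute)
    finally show ?thesis
      by simp
  qed
  then show "\<exists>N. \<forall>n\<ge>N. norm (T n y - y) < e"
    by blast
qed

lemma tendsto_contraction_compose:
  fixes P Q :: "nat \<Rightarrow> 'a::real_normed_vector \<Rightarrow> 'a"
  assumes diff: "\<And>n y z. P n (y - z) = P n y - P n z"
    and contraction: "\<And>n z. norm (P n z) \<le> norm z"
    and P: "(\<lambda>n. P n z) \<longlonglongrightarrow> z" and Q: "(\<lambda>n. Q n z) \<longlonglongrightarrow> z"
  shows "(\<lambda>n. P n (Q n z)) \<longlonglongrightarrow> z"
proof -
  have "\<forall>n. norm (P n (Q n z) - z) \<le> norm (Q n z - z) + norm (P n z - z)"
  proof
    fix n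
    have "P n (Q n z) - z = P n (Q n z - z) + (P n z - z)"
      by (simp add: diff)
    then have "norm (P n (Q n z) - z) \<le> norm (P n (Q n z - z)) + norm (P n z - z)"
      by (simp only: norm_triangle_ineq)
    then show "norm (P n (Q n z) - z) \<le> norm (Q n z - z) + norm (P n z - z)"
      using contraction[of n "Q n z - z"] by linarith
  qed
  moreover have "(\<lambda>n. norm (Q n z - z) + norm (P n z - z)) \<longlonglongrightarrow> 0"
    using tendsto_add[OF tendsto_norm_zero[OF LIM_zero[OF Q]] tendsto_norm_zero[OF LIM_zero[OF P]]]
    by simp
  ultimately have "(\<lambda>n. P n (Q n z) - z) \<longlonglongrightarrow> 0"
    by (rule Lim_null_comparison[OF always_eventually])
  then show ?thesis
    by (rule LIM_zero_cancel)
qed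

lemma norm_diff_le_vector_derivative_bound:
  fixes f :: "real \<Rightarrow> 'a::real_normed_vector"
  assumes deriv: "\<And>s. s \<in> closed_segment u t \<Longrightarrow> (f has_vector_derivative f' s) (at s)"
    and bound: "\<And>s. s \<in> closed_segment u t \<Longrightarrow> norm (f' s) \<le> K"
  shows "norm (f t - f u) \<le> K * \<bar>t - u\<bar>"
proof -
  have "norm (f t - f u) \<le> K * norm (t - u)"
  proof (rule differentiable_bound[where f'="\<lambda>s h. h *\<^sub>R f' s" and S="closed_segment u t"])
    show "(f has_derivative (\<lambda>h. h *\<^sub>R f' s)) (at s within closed_segment u t)"
      if "s \<in> closed_segment u t" for s
      using deriv[OF that] unfolding has_vector_derivative_def by (rule has_derivative_at_withinI)
    show "onorm (\<lambda>h. h *\<^sub>R f' s) \<le> K" if "s \<in> closed_segment u t" for s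
    proof -
      have "onorm (\<lambda>h::real. h *\<^sub>R f' s) = onorm (\<lambda>h::real. h) * norm (f' s)"
        using onorm_scaleR_left[OF bounded_linear_ident[where 'a=real], of "f' s"] by (simp add: id_def)
      also have "\<dots> \<le> norm (f' s)"
        using onorm_id_le by (intro mult_left_le_one_le) (auto simp: id_def onorm_pos_le)
      finally show ?thesis
        using bound[OF that] by simp
    qed
  qed auto
  then show ?thesis
    by simp
qed

lemma norm_const_of_orthogonal_derivative:
  fixes f :: "real \<Rightarrow> 'a::real_inner"
  assumes deriv: "\<And>t. (f has_vector_derivative f' t) (at t)"
    and orthogonal: "\<And>t. inner (f' t) (f t) = 0"
  shows "norm (f t) = norm (f s)"
proof -
  have "\<exists>c. \<forall>x\<in>UNIV. inner (f x) (f x) = c"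
  proof (rule has_derivative_zero_constant)
    fix x :: real
    have "((\<lambda>t. inner (f t) (f t)) has_derivative
        (\<lambda>h. inner (f x) (h *\<^sub>R f' x) + inner (h *\<^sub>R f' x) (f x))) (at x)"
      using deriv[of x] unfolding has_vector_derivative_def by (intro has_derivative_inner) auto
    then show "((\<lambda>t. inner (f t) (f t)) has_derivative (\<lambda>h. 0)) (at x within UNIV)"
      using orthogonal[of x] by (simp add: inner_commute)
  qed simp
  then show ?thesis
    by (auto simp: norm_eq_sqrt_inner)
qed

lemma norm_const_imp_vector_derivative_orthogonal:
  fixes f :: "real \<Rightarrow> 'a::real_inner"
  assumes norm_const: "\<And>t. norm (f t) = norm (f 0)"
    and deriv: "(f has_vector_derivative v) (at 0)"
  shows "inner v (f 0) = 0"
proof -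
  have "((\<lambda>t. inner (f t) (f t)) has_derivative
      (\<lambda>h. inner (f 0) (h *\<^sub>R v) + inner (h *\<^sub>R v) (f 0))) (at 0)"
    using deriv unfolding has_vector_derivative_def by (intro has_derivative_inner) auto
  moreover have "(\<lambda>t. inner (f t) (f t)) = (\<lambda>t. norm (f 0)^2)"
    using norm_const by (auto simp: power2_norm_eq_inner[symmetric])
  ultimately have "(\<lambda>h. inner (f 0) (h *\<^sub>R v) + inner (h *\<^sub>R v) (f 0)) = (\<lambda>h. 0)"
    by (metis has_derivative_const has_derivative_unique)
  from fun_cong[OF this, of 1] show ?thesis
    by (simp add: inner_commute)
qed

lemma has_vector_derivative_shift:
  assumes "(f has_vector_derivative v) (at 0)"
  shows "((\<lambda>t. f (t - s)) has_vector_derivative v) (at s)"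
proof -
  have "((f \<circ> (\<lambda>t. t - s)) has_vector_derivative 1 *\<^sub>R v) (at s)"
    by (rule vector_diff_chain_at) (auto intro!: derivative_eq_intros simp: assms)
  then show ?thesis
    by (simp add: o_def)
qed

lemma has_vector_derivative_reflect_0:
  assumes "(f has_vector_derivative v) (at 0)"
  shows "((\<lambda>t. f (- t)) has_vector_derivative - v) (at 0)"
proof -
  have "((f \<circ> uminus) has_vector_derivative (- 1) *\<^sub>R v) (at 0)"
    by (rule vector_diff_chain_at) (auto intro!: derivative_eq_intros simp: assms)
  then show ?thesis
    by (simp add: o_def)
qed

lemma difference_quotient_tendsto:
  fixes f :: "real \<Rightarrow> 'a::real_normed_vector"
  assumes "(f has_vector_derivative v) (at 0)"
  shows "(\<lambda>n. real (Suc n) *\<^sub>R (f (1 / Suc n) - f 0)) \<longlonglongrightarrow> v"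
proof (rule LIMSEQ_I)
  fix e :: real
  assume "e > 0"
  then obtain d where "d > 0"
    and d: "\<And>t. norm (t - 0) < d \<Longrightarrow> norm (f t - f 0 - (t - 0) *\<^sub>R v) \<le> e / 2 * norm (t - 0)"
    using assms[unfolded has_vector_derivative_def has_derivative_at_alt] half_gt_zero by blast
  obtain N :: nat where N: "inverse (real (Suc N)) < d"
    using reals_Archimedean[OF \<open>d > 0\<close>] by blast
  have "norm (real (Suc n) *\<^sub>R (f (1 / Suc n) - f 0) - v) < e" if "n \<ge> N" for n
  proof -
    have "1 / real (Suc n) \<le> inverse (real (Suc N))"
      using that by (simp add: divide_inverse le_imp_inverse_le)
    then have "norm (f (1 / Suc n) - f 0 - (1 / Suc n) *\<^sub>R v) \<le> e / 2 / real (Suc n)"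
      using d[of "1 / Suc n"] N by simp
    then have "real (Suc n) * norm (f (1 / Suc n) - f 0 - (1 / Suc n) *\<^sub>R v) \<le> e / 2"
      by (simp add: field_simps)
    moreover have "real (Suc n) *\<^sub>R (f (1 / Suc n) - f 0) - v
        = real (Suc n) *\<^sub>R (f (1 / Suc n) - f 0 - (1 / Suc n) *\<^sub>R v)"
      by (simp add: algebra_simps)
    ultimately show ?thesis
      using \<open>e > 0\<close> by simp
  qed
  then show "\<exists>N. \<forall>n\<ge>N. norm (real (Suc n) *\<^sub>R (f (1 / Suc n) - f 0) - v) < e"
    by blast
qed

lemma norm_contraction_apply_remainder_le:
  fixes W :: "real \<Rightarrow> 'a::real_normed_vector \<Rightarrow>\<^sub>L 'a"
  assumes contraction: "\<And>y. norm (W t y) \<le> norm y" and W0: "\<And>y. W 0 y = y" and f0: "f 0 = \<xi>"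
  shows "norm (W t (f t) - W 0 (f 0) - t *\<^sub>R (a + b))
    \<le> norm (W t \<xi> - W 0 \<xi> - t *\<^sub>R a) + norm (f t - f 0 - t *\<^sub>R b) + \<bar>t\<bar> * norm (W t b - b)"
proof -
  have "W t (f t) - W 0 (f 0) - t *\<^sub>R (a + b) =
      (W t \<xi> - W 0 \<xi> - t *\<^sub>R a) + W t (f t - f 0 - t *\<^sub>R b) + t *\<^sub>R (W t b - b)"
    by (simp add: f0 W0 blinfun.bilinear_simps algebra_simps)
  then have "norm (W t (f t) - W 0 (f 0) - t *\<^sub>R (a + b)) \<le> norm (W t \<xi> - W 0 \<xi> - t *\<^sub>R a)
      + norm (W t (f t - f 0 - t *\<^sub>R b)) + norm (t *\<^sub>R (W t b - b))"
    by (simp only: norm_triangle_add3)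
  then show ?thesis
    using contraction[of "f t - f 0 - t *\<^sub>R b"] by simp
qed

text \<open>A product rule in which continuity of \<open>t \<mapsto> W t b\<close> replaces norm continuity of W.\<close>

lemma has_vector_derivative_contraction_apply:
  fixes W :: "real \<Rightarrow> 'a::real_normed_vector \<Rightarrow>\<^sub>L 'a"
  assumes contraction: "\<And>t y. norm (W t y) \<le> norm y"
    and W0: "\<And>y. W 0 y = y"
    and dW: "((\<lambda>t. W t \<xi>) has_vector_derivative a) (at 0)"
    and df: "(f has_vector_derivative b) (at 0)" and f0: "f 0 = \<xi>"
    and cont: "isCont (\<lambda>t. W t b) 0"
  shows "((\<lambda>t. W t (f t)) has_vector_derivative a + b) (at 0)"
  unfolding has_vector_derivative_def has_derivative_at_alt
proof (intro conjI allI impI)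
  show "bounded_linear (\<lambda>h. h *\<^sub>R (a + b))"
    by (rule bounded_linear_scaleR_left)
  fix e :: real
  assume "e > 0"
  then have "e / 3 > 0"
    by simp
  then obtain d1 d2 d3 where "d1 > 0" "d2 > 0" "d3 > 0"
    and d1: "\<And>t. norm (t - 0) < d1 \<Longrightarrow> norm (W t \<xi> - W 0 \<xi> - (t - 0) *\<^sub>R a) \<le> e / 3 * norm (t - 0)"
    and d2: "\<And>t. norm (t - 0) < d2 \<Longrightarrow> norm (f t - f 0 - (t - 0) *\<^sub>R b) \<le> e / 3 * norm (t - 0)"
    and d3: "\<And>t. dist t 0 < d3 \<Longrightarrow> dist (W t b) (W 0 b) < e / 3"
    using dW[unfolded has_vector_derivative_def has_derivative_at_alt]
      df[unfolded has_vector_derivative_def has_derivative_at_alt]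
      cont[unfolded continuous_at_eps_delta]
    by metis
  have "norm (W t (f t) - W 0 (f 0) - (t - 0) *\<^sub>R (a + b)) \<le> e * norm (t - 0)"
    if t: "norm (t - 0) < min d1 (min d2 d3)" for t
  proof -
    have "\<bar>t\<bar> * norm (W t b - b) \<le> \<bar>t\<bar> * (e / 3)"
      using d3[of t] t W0[of b] by (intro mult_left_mono) (simp_all add: dist_norm)
    then show ?thesis
      using norm_contraction_apply_remainder_le[where W=W and f=f and \<xi>=\<xi> and t=t and a=a and b=b,
          OF contraction W0 f0]
        d1[of t] d2[of t] t
      by (simp add: mult.commute)
  qed
  then show "\<exists>d>0. \<forall>t. norm (t - 0) < d \<longrightarrow>
      norm (W t (f t) - W 0 (f 0) - (t - 0) *\<^sub>R (a + b)) \<le> e * norm (t - 0)"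
    using \<open>d1 > 0\<close> \<open>d2 > 0\<close> \<open>d3 > 0\<close> by (intro exI[of _ "min d1 (min d2 d3)"]) auto
qed

section \<open>Self-adjoint operators and their resolvents\<close>

locale self_adjoint =
  fixes D :: "'a::{complex_inner,complete_space} set" and h :: "'a \<Rightarrow> 'a"
  assumes self_adjoint: "self_adjoint_op D h"
begin

lemma dom_dense: "closure D = UNIV"
  using self_adjoint by (simp add: self_adjoint_op_def)

lemma dom_csubspace: "csubspace D"
  using self_adjoint by (simp add: self_adjoint_op_def clinear_on_def)

lemma dom_scaleC: "x \<in> D \<Longrightarrow> a *\<^sub>C x \<in> D"
  using dom_csubspace by (simp add: csubspace_def)

lemma dom_subspace: "subspace D"
  using dom_csubspace dom_scaleC[of _ "complex_of_real _"] by (auto simp: csubspace_def subspace_def)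

lemma dom_zero [simp]: "0 \<in> D"
  and dom_add: "x \<in> D \<Longrightarrow> y \<in> D \<Longrightarrow> x + y \<in> D"
  and dom_diff: "x \<in> D \<Longrightarrow> y \<in> D \<Longrightarrow> x - y \<in> D"
  and dom_scaleR: "x \<in> D \<Longrightarrow> r *\<^sub>R x \<in> D"
  using dom_subspace by (simp_all add: subspace_0 subspace_add subspace_diff subspace_scale)

lemma op_add: "x \<in> D \<Longrightarrow> y \<in> D \<Longrightarrow> h (x + y) = h x + h y"
  and op_scaleC: "x \<in> D \<Longrightarrow> h (a *\<^sub>C x) = a *\<^sub>C h x"
  using self_adjoint by (simp_all add: self_adjoint_op_def clinear_on_def)

lemma op_scaleR: "x \<in> D \<Longrightarrow> h (r *\<^sub>R x) = r *\<^sub>R h x"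
  using op_scaleC[of x "complex_of_real r"] by simp

lemma op_diff: "x \<in> D \<Longrightarrow> y \<in> D \<Longrightarrow> h (x - y) = h x - h y"
  using op_add[of x "- y"] op_scaleR[of y "- 1"] dom_scaleR[of y "- 1"] by simp

lemma inner_op_symmetric: "x \<in> D \<Longrightarrow> y \<in> D \<Longrightarrow> inner (h x) y = inner x (h y)"
  using self_adjoint by (simp add: self_adjoint_op_def cinner_def complex_eq_iff)

text \<open>Self-adjointness, tested with the real inner product only: since D is invariant
  under multiplication by \<open>\<i>\<close>, the real part of the adjoint relation determines the
  imaginary part.\<close>

lemma adjoint_real:
  assumes adj: "\<forall>x\<in>D. inner (h x) y = inner x z"
  shows "y \<in> D \<and> h y = z"
proof -
  have "cinner (h x) y = cinner x z" if x: "x \<in> D" for x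
  proof -
    have "inner (h x) (\<i> *\<^sub>C y) = - inner (h (\<i> *\<^sub>C x)) y"
      by (simp add: inner_scaleC_ii_left op_scaleC x)
    also have "\<dots> = inner x (\<i> *\<^sub>C z)"
      using adj dom_scaleC[OF x] by (simp add: inner_scaleC_ii_left)
    finally show ?thesis
      using adj x by (simp add: cinner_def complex_eq_iff)
  qed
  then have "y \<in> adjoint_dom D h"
    by (auto simp: adjoint_dom_def)
  with self_adjoint have "y \<in> D"
    by (simp add: self_adjoint_op_def)
  have "inner x (h y - z) = 0" for x
  proof (rule dense_imp_closed_property[OF dom_dense, where P="\<lambda>x. inner x (h y - z) = 0"])
    show "closed {x. inner x (h y - z) = 0}"
      by (intro closed_Collect_eq continuous_intros)
    show "\<forall>x\<in>D. inner x (h y - z) = 0"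
      using adj \<open>y \<in> D\<close> by (auto simp: inner_diff_right inner_op_symmetric[symmetric])
  qed
  from this[of "h y - z"] \<open>y \<in> D\<close> show ?thesis
    by simp
qed

definition gen :: "'a \<Rightarrow> 'a" where
  "gen x = \<i> *\<^sub>C h x"

lemma gen_add: "x \<in> D \<Longrightarrow> y \<in> D \<Longrightarrow> gen (x + y) = gen x + gen y"
  and gen_diff: "x \<in> D \<Longrightarrow> y \<in> D \<Longrightarrow> gen (x - y) = gen x - gen y"
  and gen_scaleR: "x \<in> D \<Longrightarrow> gen (r *\<^sub>R x) = r *\<^sub>R gen x"
  and gen_scaleC_ii: "x \<in> D \<Longrightarrow> gen (\<i> *\<^sub>C x) = \<i> *\<^sub>C gen x"
  by (simp_all add: gen_def op_add op_diff op_scaleR op_scaleC scaleC_add_right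
      scaleC_diff_right scaleC_scaleR_right)

lemma gen_zero [simp]: "gen 0 = 0"
  using gen_scaleR[of 0 0] by simp

lemma inner_gen_skew: "x \<in> D \<Longrightarrow> y \<in> D \<Longrightarrow> inner (gen x) y = - inner x (gen y)"
  using inner_op_symmetric[of x "\<i> *\<^sub>C y"] dom_scaleC[of y \<i>]
  by (simp add: gen_def inner_scaleC_ii_left op_scaleC)

lemma inner_gen_self: "x \<in> D \<Longrightarrow> inner (gen x) x = 0"
  using inner_gen_skew[of x x] by (simp add: inner_commute)

lemma gen_closed:
  assumes D: "\<And>n. xs n \<in> D" and xs: "xs \<longlonglongrightarrow> x" and gen_xs: "(\<lambda>n. gen (xs n)) \<longlonglongrightarrow> y"
  shows "x \<in> D \<and> gen x = y"
proof -
  have "(\<lambda>n. - (\<i> *\<^sub>C gen (xs n))) \<longlonglongrightarrow> - (\<i> *\<^sub>C y)"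
    by (intro tendsto_minus bounded_linear.tendsto[OF bounded_linear_scaleC_ii] gen_xs)
  then have h_xs: "(\<lambda>n. h (xs n)) \<longlonglongrightarrow> - (\<i> *\<^sub>C y)"
    by (simp add: gen_def)
  have "\<forall>z\<in>D. inner (h z) x = inner z (- (\<i> *\<^sub>C y))"
  proof
    fix z
    assume z: "z \<in> D"
    show "inner (h z) x = inner z (- (\<i> *\<^sub>C y))"
    proof (rule LIMSEQ_unique)
      show "(\<lambda>n. inner (h z) (xs n)) \<longlonglongrightarrow> inner (h z) x"
        by (intro tendsto_intros xs)
      show "(\<lambda>n. inner (h z) (xs n)) \<longlonglongrightarrow> inner z (- (\<i> *\<^sub>C y))"
        using tendsto_inner[OF tendsto_const h_xs, of z] by (simp add: inner_op_symmetric z D)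
    qed
  qed
  from adjoint_real[OF this] have "x \<in> D" "h x = - (\<i> *\<^sub>C y)"
    by auto
  then show ?thesis
    by (simp add: gen_def scaleC_minus_right)
qed

lemma norm_scaleR_minus_gen_ge:
  assumes "x \<in> D"
  shows "\<bar>l\<bar> * norm x \<le> norm (l *\<^sub>R x - gen x)"
proof (rule power2_le_imp_le)
  have "norm (l *\<^sub>R x - gen x)^2 = l^2 * norm x ^2 + norm (gen x)^2"
    unfolding power2_norm_eq_inner using inner_gen_self[OF assms]
    by (simp add: inner_diff_left inner_diff_right inner_commute[of x "gen x"]
        power2_eq_square algebra_simps)
  then show "(\<bar>l\<bar> * norm x)^2 \<le> norm (l *\<^sub>R x - gen x)^2"
    by (simp add: power_mult_distrib)
qed simp

lemma closed_range_scaleR_minus_gen: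
  assumes "l \<noteq> 0"
  shows "closed ((\<lambda>x. l *\<^sub>R x - gen x) ` D)"
  unfolding closed_sequential_limits
proof (intro allI impI, elim conjE)
  fix zs z
  assume "\<forall>n. zs n \<in> (\<lambda>x. l *\<^sub>R x - gen x) ` D" and zs: "zs \<longlonglongrightarrow> z"
  then have "\<forall>n. \<exists>x. x \<in> D \<and> zs n = l *\<^sub>R x - gen x"
    by blast
  then obtain xs where "\<forall>n. xs n \<in> D \<and> zs n = l *\<^sub>R xs n - gen (xs n)"
    by metis
  then have D: "\<And>n. xs n \<in> D" and zs_eq: "\<And>n. zs n = l *\<^sub>R xs n - gen (xs n)"
    by auto
  have "Cauchy xs"
  proof (rule metric_CauchyI)
    fix e :: real
    assume "e > 0"
    then obtain N where N: "\<forall>m\<ge>N. \<forall>n\<ge>N. dist (zs m) (zs n) < e * \<bar>l\<bar>"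
      using metric_CauchyD[OF LIMSEQ_imp_Cauchy[OF zs], of "e * \<bar>l\<bar>"] assms by auto
    have "dist (xs m) (xs n) < e" if "m \<ge> N" "n \<ge> N" for m n
    proof -
      have "\<bar>l\<bar> * norm (xs m - xs n) \<le> norm (zs m - zs n)"
        using norm_scaleR_minus_gen_ge[OF dom_diff[OF D[of m] D[of n]], of l]
        by (simp add: zs_eq gen_diff D algebra_simps)
      also have "\<dots> < e * \<bar>l\<bar>"
        using N that by (simp add: dist_norm)
      finally show ?thesis
        using assms by (simp add: dist_norm mult.commute)
    qed
    then show "\<exists>N. \<forall>m\<ge>N. \<forall>n\<ge>N. dist (xs m) (xs n) < e"
      by blast
  qed
  then obtain x where xs: "xs \<longlonglongrightarrow> x"
    by (auto simp: Cauchy_convergent_iff convergent_def)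
  have "(\<lambda>n. l *\<^sub>R xs n - zs n) \<longlonglongrightarrow> l *\<^sub>R x - z"
    by (intro tendsto_intros xs zs)
  then have "(\<lambda>n. gen (xs n)) \<longlonglongrightarrow> l *\<^sub>R x - z"
    by (simp add: zs_eq)
  from gen_closed[OF D xs this] show "z \<in> (\<lambda>x. l *\<^sub>R x - gen x) ` D"
    by (auto intro!: image_eqI[of _ _ x])
qed

lemma subspace_range_scaleR_minus_gen: "subspace ((\<lambda>x. l *\<^sub>R x - gen x) ` D)"
proof -
  define M where "M = (\<lambda>x. l *\<^sub>R x - gen x) ` D"
  have "a + b \<in> M" if ab: "a \<in> M" "b \<in> M" for a b
  proof -
    obtain u v where "u \<in> D" "v \<in> D" and a: "a = l *\<^sub>R u - gen u" and b: "b = l *\<^sub>R v - gen v"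
      using ab unfolding M_def by blast
    then have "u + v \<in> D" "a + b = l *\<^sub>R (u + v) - gen (u + v)"
      unfolding a b by (simp_all add: dom_add gen_add algebra_simps)
    then show ?thesis
      unfolding M_def by (rule image_eqI[rotated])
  qed
  moreover have "c *\<^sub>R a \<in> M" if aM: "a \<in> M" for a c
  proof -
    obtain u where "u \<in> D" and a: "a = l *\<^sub>R u - gen u"
      using aM unfolding M_def by blast
    then have "c *\<^sub>R u \<in> D" "c *\<^sub>R a = l *\<^sub>R (c *\<^sub>R u) - gen (c *\<^sub>R u)"
      unfolding a by (simp_all add: dom_scaleR gen_scaleR algebra_simps)
    then show ?thesis
      unfolding M_def by (rule image_eqI[rotated])
  qed
  moreover have "0 \<in> M"
    by (auto simp: M_def intro!: image_eqI[of _ _ 0])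
  ultimately show ?thesis
    unfolding M_def by (intro subspaceI)
qed

text \<open>The range of \<open>l - \<i> h\<close> is closed and its orthogonal complement is trivial, because a
  vector orthogonal to it is an eigenvector of the skew operator \<open>\<i> h\<close> with the real
  eigenvalue \<open>- l\<close>.\<close>

lemma scaleR_minus_gen_surj:
  assumes "l \<noteq> 0"
  shows "\<exists>x\<in>D. l *\<^sub>R x - gen x = y"
proof -
  define M where "M = (\<lambda>x. l *\<^sub>R x - gen x) ` D"
  have "subspace M"
    unfolding M_def by (rule subspace_range_scaleR_minus_gen)
  moreover have "closed M"
    unfolding M_def by (rule closed_range_scaleR_minus_gen[OF assms])
  ultimately obtain p where "p \<in> M" and nearest: "\<And>m. m \<in> M \<Longrightarrow> norm (y - p) \<le> norm (y - m)"
    using nearest_point_in_closed_subspace by blast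
  define v where "v = y - p"
  have "\<forall>x\<in>D. inner (h x) (\<i> *\<^sub>C v) = inner x ((- l) *\<^sub>R v)"
  proof
    fix x
    assume "x \<in> D"
    then have "inner v (l *\<^sub>R x - gen x) = 0"
      using nearest_point_orthogonal[OF \<open>subspace M\<close> \<open>p \<in> M\<close> _ nearest]
      by (simp add: M_def v_def)
    then show "inner (h x) (\<i> *\<^sub>C v) = inner x ((- l) *\<^sub>R v)"
      using inner_scaleC_ii_left[of v "h x"] by (simp add: gen_def inner_diff_right inner_commute)
  qed
  from adjoint_real[OF this] have "\<i> *\<^sub>C v \<in> D" "h (\<i> *\<^sub>C v) = (- l) *\<^sub>R v"
    by auto
  then have "l * inner (\<i> *\<^sub>C v) (\<i> *\<^sub>C v) = 0"
    using inner_gen_self[of "\<i> *\<^sub>C v"] by (simp add: gen_def scaleC_scaleR_right scaleC_minus_right)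
  then have "v = 0"
    using assms by (simp add: inner_scaleC_ii)
  then show ?thesis
    using \<open>p \<in> M\<close> by (auto simp: v_def M_def)
qed

definition resolvent :: "real \<Rightarrow> 'a \<Rightarrow> 'a" where
  "resolvent l y = (SOME x. x \<in> D \<and> l *\<^sub>R x - gen x = y)"

lemma resolvent_in_dom: "l \<noteq> 0 \<Longrightarrow> resolvent l y \<in> D"
  and gen_resolvent: "l \<noteq> 0 \<Longrightarrow> gen (resolvent l y) = l *\<^sub>R resolvent l y - y"
  using someI_ex[OF scaleR_minus_gen_surj[of l y, unfolded Bex_def]]
  by (auto simp: resolvent_def algebra_simps)

lemma resolvent_unique:
  assumes "l \<noteq> 0" and "x \<in> D" and "l *\<^sub>R x - gen x = y"
  shows "resolvent l y = x"
proof -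
  have "l *\<^sub>R (resolvent l y - x) - gen (resolvent l y - x) = 0"
    using assms by (simp add: gen_diff resolvent_in_dom gen_resolvent algebra_simps)
  moreover have "\<bar>l\<bar> * norm (resolvent l y - x)
      \<le> norm (l *\<^sub>R (resolvent l y - x) - gen (resolvent l y - x))"
    using assms by (intro norm_scaleR_minus_gen_ge dom_diff resolvent_in_dom)
  ultimately have "\<bar>l\<bar> * norm (resolvent l y - x) \<le> 0"
    by simp
  then show ?thesis
    using assms(1) by (simp add: mult_le_0_iff)
qed

lemma resolvent_add: "l \<noteq> 0 \<Longrightarrow> resolvent l (x + y) = resolvent l x + resolvent l y"
  by (rule resolvent_unique)
    (auto simp: resolvent_in_dom dom_add gen_add gen_resolvent algebra_simps)

lemma resolvent_diff: "l \<noteq> 0 \<Longrightarrow> resolvent l (x - y) = resolvent l x - resolvent l y"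
  by (rule resolvent_unique)
    (auto simp: resolvent_in_dom dom_diff gen_diff gen_resolvent algebra_simps)

lemma resolvent_scaleR: "l \<noteq> 0 \<Longrightarrow> resolvent l (r *\<^sub>R x) = r *\<^sub>R resolvent l x"
  by (rule resolvent_unique)
    (auto simp: resolvent_in_dom dom_scaleR gen_scaleR gen_resolvent algebra_simps)

lemma resolvent_minus: "l \<noteq> 0 \<Longrightarrow> resolvent l (- x) = - resolvent l x"
  using resolvent_scaleR[of l "- 1" x] by simp

lemma resolvent_scaleC_ii: "l \<noteq> 0 \<Longrightarrow> resolvent l (\<i> *\<^sub>C x) = \<i> *\<^sub>C resolvent l x"
  by (rule resolvent_unique)
    (auto simp: resolvent_in_dom dom_scaleC gen_scaleC_ii gen_resolvent scaleC_scaleR_right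
      scaleC_diff_right)

lemma norm_resolvent_le:
  assumes "l \<noteq> 0"
  shows "\<bar>l\<bar> * norm (resolvent l y) \<le> norm y"
proof -
  have "\<bar>l\<bar> * norm (resolvent l y) \<le> norm (l *\<^sub>R resolvent l y - gen (resolvent l y))"
    by (rule norm_scaleR_minus_gen_ge[OF resolvent_in_dom[OF assms]])
  then show ?thesis
    by (simp add: gen_resolvent[OF assms])
qed

lemma bounded_linear_resolvent: "l \<noteq> 0 \<Longrightarrow> bounded_linear (resolvent l)"
proof (rule bounded_linear_intro[where K="1 / \<bar>l\<bar>"])
  fix y
  assume "l \<noteq> 0"
  then show "norm (resolvent l y) \<le> norm y * (1 / \<bar>l\<bar>)"
    using norm_resolvent_le[of l y] by (simp add: field_simps)
qed (simp_all add: resolvent_add resolvent_scaleR)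

lemma resolvent_gen: "l \<noteq> 0 \<Longrightarrow> x \<in> D \<Longrightarrow> resolvent l (gen x) = l *\<^sub>R resolvent l x - x"
proof -
  assume "l \<noteq> 0" "x \<in> D"
  then have "resolvent l (l *\<^sub>R x - gen x) = x"
    by (intro resolvent_unique) auto
  with \<open>l \<noteq> 0\<close> show ?thesis
    by (simp add: resolvent_diff resolvent_scaleR algebra_simps)
qed

lemma resolvent_gen_commute: "l \<noteq> 0 \<Longrightarrow> x \<in> D \<Longrightarrow> resolvent l (gen x) = gen (resolvent l x)"
  by (simp add: resolvent_gen gen_resolvent)

lemma resolvent_commute:
  assumes a: "a \<noteq> 0" and b: "b \<noteq> 0"
  shows "resolvent a (resolvent b y) = resolvent b (resolvent a y)"
proof -
  define u where "u = resolvent a (resolvent b y)"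
  have "u \<in> D"
    using resolvent_in_dom[OF a] by (simp add: u_def)
  have gen_u: "gen u = a *\<^sub>R u - resolvent b y"
    using gen_resolvent[OF a] by (simp add: u_def)
  have "gen u \<in> D"
    using gen_u \<open>u \<in> D\<close> resolvent_in_dom[OF b] by (simp add: dom_diff dom_scaleR)
  define v where "v = b *\<^sub>R u - gen u"
  have "v \<in> D"
    using \<open>u \<in> D\<close> \<open>gen u \<in> D\<close> by (simp add: v_def dom_diff dom_scaleR)
  have "gen (gen u) = a *\<^sub>R gen u - (b *\<^sub>R resolvent b y - y)"
    using \<open>u \<in> D\<close> resolvent_in_dom[OF b] gen_resolvent[OF b]
    by (simp add: gen_u gen_diff gen_scaleR dom_scaleR)
  moreover have "gen v = b *\<^sub>R gen u - gen (gen u)"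
    using \<open>u \<in> D\<close> \<open>gen u \<in> D\<close> by (simp add: v_def gen_diff gen_scaleR dom_scaleR)
  ultimately have "gen v = b *\<^sub>R gen u - a *\<^sub>R gen u + (b *\<^sub>R resolvent b y - y)"
    by simp
  then have "a *\<^sub>R v - gen v = y"
    unfolding v_def by (simp add: gen_u algebra_simps)
  then have "resolvent a y = v"
    using a \<open>v \<in> D\<close> by (intro resolvent_unique)
  then have "resolvent b (resolvent a y) = u"
    using b \<open>u \<in> D\<close> by (simp add: resolvent_unique v_def)
  then show ?thesis
    by (simp add: u_def)
qed

lemma scaled_resolvent_tendsto:
  fixes s :: real
  assumes "s \<noteq> 0"
  shows "(\<lambda>n. (s * Suc n) *\<^sub>R resolvent (s * Suc n) y) \<longlonglongrightarrow> y"
proof (rule contractions_tendsto_on_dense[OF dom_dense])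
  fix n z
  have "s * Suc n \<noteq> 0"
    using assms by simp
  then show "norm ((s * Suc n) *\<^sub>R resolvent (s * Suc n) z) \<le> norm z"
    using norm_resolvent_le by simp
  fix x y
  show "(s * Suc n) *\<^sub>R resolvent (s * Suc n) (x - y) =
      (s * Suc n) *\<^sub>R resolvent (s * Suc n) x - (s * Suc n) *\<^sub>R resolvent (s * Suc n) y"
    using \<open>s * Suc n \<noteq> 0\<close> by (simp add: resolvent_diff scaleR_diff_right)
next
  fix d
  assume "d \<in> D"
  \<comment> \<open>On D the error is the resolvent of \<open>gen d\<close>, of norm at most \<open>norm (gen d) / (\<bar>s\<bar> (n + 1))\<close>.\<close>
  have "\<forall>n. norm ((s * Suc n) *\<^sub>R resolvent (s * Suc n) d - d) \<le> norm (gen d) / \<bar>s\<bar> * inverse (Suc n)"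
  proof
    fix n
    have "s * Suc n \<noteq> 0"
      using assms by simp
    have "norm ((s * Suc n) *\<^sub>R resolvent (s * Suc n) d - d) = norm (resolvent (s * Suc n) (gen d))"
      using resolvent_gen[OF \<open>s * Suc n \<noteq> 0\<close> \<open>d \<in> D\<close>] by simp
    also have "\<dots> \<le> norm (gen d) / \<bar>s * Suc n\<bar>"
      using norm_resolvent_le[OF \<open>s * Suc n \<noteq> 0\<close>, of "gen d"] \<open>s * Suc n \<noteq> 0\<close>
      by (simp add: le_divide_eq mult.commute)
    also have "\<dots> = norm (gen d) / \<bar>s\<bar> * inverse (Suc n)"
      by (simp add: abs_mult divide_inverse)
    finally show "norm ((s * Suc n) *\<^sub>R resolvent (s * Suc n) d - d)
        \<le> norm (gen d) / \<bar>s\<bar> * inverse (Suc n)" .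
  qed
  then have "(\<lambda>n. (s * Suc n) *\<^sub>R resolvent (s * Suc n) d - d) \<longlonglongrightarrow> 0"
    by (rule Lim_null_comparison[OF always_eventually
          tendsto_mult_right_zero[OF LIMSEQ_inverse_real_of_nat]])
  then show "(\<lambda>n. (s * Suc n) *\<^sub>R resolvent (s * Suc n) d) \<longlonglongrightarrow> d"
    by (rule LIM_zero_cancel)
qed

definition resolvent_endo :: "real \<Rightarrow> 'a endo" where
  "resolvent_endo l = endo_of (Blinfun (resolvent l))"

lemma endo_op_resolvent_endo [simp]: "l \<noteq> 0 \<Longrightarrow> endo_op (resolvent_endo l) y = resolvent l y"
  by (simp add: resolvent_endo_def bounded_linear_Blinfun_apply bounded_linear_resolvent)

lemma resolvent_endo_commute:
  "a \<noteq> 0 \<Longrightarrow> b \<noteq> 0 \<Longrightarrow> resolvent_endo a * resolvent_endo b = resolvent_endo b * resolvent_endo a"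
  unfolding resolvent_endo_def endo_of_compose[symmetric]
  by (rule arg_cong[where f=endo_of], rule blinfun_eqI)
    (simp add: bounded_linear_Blinfun_apply bounded_linear_resolvent resolvent_commute)

lemma resolvent_endo_commute_ii:
  "l \<noteq> 0 \<Longrightarrow> resolvent_endo l * endo_of (Blinfun (\<lambda>x. \<i> *\<^sub>C x))
    = endo_of (Blinfun (\<lambda>x. \<i> *\<^sub>C x)) * resolvent_endo l"
  unfolding resolvent_endo_def endo_of_compose[symmetric]
  by (rule arg_cong[where f=endo_of], rule blinfun_eqI)
    (simp add: bounded_linear_Blinfun_apply bounded_linear_resolvent bounded_linear_scaleC_ii
      resolvent_scaleC_ii)

end

section \<open>Stone's theorem by Yosida approximation\<close>

context self_adjoint
begin

text \<open>The symmetrised Yosida approximation \<open>c\<^sup>2 A (c\<^sup>2 - A\<^sup>2)\<^sup>-\<^sup>1\<close> of \<open>A = \<i> h\<close>, with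
  \<open>c = n + 1\<close>. Unlike \<open>c A (c - A)\<^sup>-\<^sup>1\<close> it is again skew, so its exponentials are isometries.\<close>

definition yosida :: "nat \<Rightarrow> 'a endo" where
  "yosida n = (- (real (Suc n) ^ 2)) *\<^sub>R
     (real (Suc n) *\<^sub>R (resolvent_endo (Suc n) * resolvent_endo (- real (Suc n)))
      - resolvent_endo (- real (Suc n)))"

lemma endo_op_yosida:
  "endo_op (yosida n) y = (- (real (Suc n) ^ 2)) *\<^sub>R gen (resolvent (Suc n) (resolvent (- real (Suc n)) y))"
  by (simp add: yosida_def gen_resolvent)

lemma inner_yosida_self: "inner (endo_op (yosida n) y) y = 0"
proof -
  define c :: real where "c = Suc n"
  have c: "c \<noteq> 0" "- c \<noteq> 0"
    by (simp_all add: c_def)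
  define z where "z = resolvent (- c) y"
  define w where "w = resolvent c z"
  have "z \<in> D" "w \<in> D"
    using resolvent_in_dom c by (simp_all add: z_def w_def)
  have gen_w: "gen w = c *\<^sub>R w - z"
    using gen_resolvent[OF c(1)] by (simp add: w_def)
  have "gen w \<in> D"
    using gen_w \<open>w \<in> D\<close> \<open>z \<in> D\<close> by (simp add: dom_diff dom_scaleR)
  have "gen (gen w) = c *\<^sub>R gen w - ((- c) *\<^sub>R z - y)"
    using \<open>w \<in> D\<close> \<open>z \<in> D\<close> gen_resolvent[OF c(2)]
    by (simp add: gen_w gen_diff gen_scaleR dom_scaleR z_def)
  \<comment> \<open>Hence \<open>y = A\<^sup>2 w - c\<^sup>2 w\<close>, which is orthogonal to \<open>A w\<close> by skewness.\<close>
  then have y: "y = gen (gen w) - c^2 *\<^sub>R w"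
    by (simp add: gen_w algebra_simps power2_eq_square)
  have "inner (gen w) y = 0"
    using inner_gen_self[OF \<open>gen w \<in> D\<close>] inner_gen_self[OF \<open>w \<in> D\<close>]
    by (subst y) (simp add: inner_diff_right inner_commute)
  then show ?thesis
    by (simp add: endo_op_yosida w_def z_def c_def)
qed

lemma endo_op_yosida_dom:
  assumes "x \<in> D"
  shows "endo_op (yosida n) x
    = real (Suc n) *\<^sub>R resolvent (Suc n) ((- real (Suc n)) *\<^sub>R resolvent (- real (Suc n)) (gen x))"
proof -
  define c :: real where "c = Suc n"
  have c: "c \<noteq> 0" "- c \<noteq> 0"
    by (simp_all add: c_def)
  have "gen (resolvent c (resolvent (- c) x)) = resolvent c (resolvent (- c) (gen x))"
    using resolvent_gen_commute[OF c(1) resolvent_in_dom[OF c(2)]]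
      resolvent_gen_commute[OF c(2) assms] by simp
  then have "endo_op (yosida n) x = (- (c^2)) *\<^sub>R resolvent c (resolvent (- c) (gen x))"
    by (simp add: endo_op_yosida c_def)
  also have "\<dots> = c *\<^sub>R resolvent c ((- c) *\<^sub>R resolvent (- c) (gen x))"
    by (simp add: resolvent_scaleR[OF c(1)] resolvent_minus[OF c(1)] power2_eq_square)
  finally show ?thesis
    by (simp add: c_def)
qed

lemma yosida_tendsto:
  assumes "x \<in> D"
  shows "(\<lambda>n. endo_op (yosida n) x) \<longlonglongrightarrow> gen x"
proof -
  have "(\<lambda>n. real (Suc n) *\<^sub>R resolvent (Suc n) ((- real (Suc n)) *\<^sub>R resolvent (- real (Suc n)) (gen x)))
      \<longlonglongrightarrow> gen x"
  proof (rule tendsto_contraction_compose[where P="\<lambda>n z. real (Suc n) *\<^sub>R resolvent (Suc n) z"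
        and Q="\<lambda>n z. (- real (Suc n)) *\<^sub>R resolvent (- real (Suc n)) z"])
    show "(\<lambda>n. real (Suc n) *\<^sub>R resolvent (Suc n) (gen x)) \<longlonglongrightarrow> gen x"
      "(\<lambda>n. (- real (Suc n)) *\<^sub>R resolvent (- real (Suc n)) (gen x)) \<longlonglongrightarrow> gen x"
      using scaled_resolvent_tendsto[of 1 "gen x"] scaled_resolvent_tendsto[of "- 1" "gen x"] by simp_all
    show "real (Suc n) *\<^sub>R resolvent (Suc n) (y - z)
        = real (Suc n) *\<^sub>R resolvent (Suc n) y - real (Suc n) *\<^sub>R resolvent (Suc n) z" for n y z
      by (simp add: resolvent_diff scaleR_diff_right)
    show "norm (real (Suc n) *\<^sub>R resolvent (Suc n) z) \<le> norm z" for n z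
      using norm_resolvent_le[of "Suc n" z] by simp
  qed
  then show ?thesis
    by (simp add: endo_op_yosida_dom[OF assms])
qed

lemma yosida_commute: "yosida n * yosida m = yosida m * yosida n"
proof -
  have "resolvent_endo l * yosida m = yosida m * resolvent_endo l" if "l \<noteq> 0" for l
    unfolding yosida_def using that by (intro commute_scaleR_mult_diff) (simp_all add: resolvent_endo_commute)
  then have "yosida m * yosida n = yosida n * yosida m"
    unfolding yosida_def[of n] by (intro commute_scaleR_mult_diff) simp_all
  then show ?thesis
    by simp
qed

lemma yosida_commute_ii:
  "yosida n * endo_of (Blinfun (\<lambda>x. \<i> *\<^sub>C x)) = endo_of (Blinfun (\<lambda>x. \<i> *\<^sub>C x)) * yosida n"
  unfolding yosida_def
  by (rule commute_scaleR_mult_diff[symmetric]) (simp_all add: resolvent_endo_commute_ii)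

definition yosida_exp :: "nat \<Rightarrow> real \<Rightarrow> 'a endo" where
  "yosida_exp n t = exp (t *\<^sub>R yosida n)"

lemma yosida_exp_zero [simp]: "yosida_exp n 0 = 1"
  by (simp add: yosida_exp_def)

lemma yosida_exp_add: "yosida_exp n (s + t) = yosida_exp n s * yosida_exp n t"
  unfolding yosida_exp_def by (simp add: scaleR_add_left exp_add_commuting)

lemma yosida_exp_commute_yosida: "yosida_exp n t * yosida m = yosida m * yosida_exp n t"
  unfolding yosida_exp_def by (rule exp_mult_commute) (simp add: yosida_commute)

lemma yosida_exp_scaleC_ii: "endo_op (yosida_exp n t) (\<i> *\<^sub>C x) = \<i> *\<^sub>C endo_op (yosida_exp n t) x"
proof -
  have "yosida_exp n t * endo_of (Blinfun (\<lambda>x. \<i> *\<^sub>C x)) = endo_of (Blinfun (\<lambda>x. \<i> *\<^sub>C x)) * yosida_exp n t"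
    unfolding yosida_exp_def by (rule exp_mult_commute) (simp add: yosida_commute_ii)
  from arg_cong[OF this, of "\<lambda>X. endo_op X x"] show ?thesis
    by (simp add: bounded_linear_Blinfun_apply bounded_linear_scaleC_ii)
qed

lemma yosida_exp_has_vector_derivative:
  "(yosida_exp n has_vector_derivative yosida_exp n t * yosida n) (at t)"
  "(yosida_exp n has_vector_derivative yosida n * yosida_exp n t) (at t)"
  unfolding yosida_exp_def[abs_def]
  by (rule exp_scaleR_has_vector_derivative_right exp_scaleR_has_vector_derivative_left)+

lemma yosida_exp_apply_has_vector_derivative:
  "((\<lambda>t. endo_op (yosida_exp n t) x) has_vector_derivative
      endo_op (yosida_exp n t) (endo_op (yosida n) x)) (at t)"
  "((\<lambda>t. endo_op (yosida_exp n t) x) has_vector_derivative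
      endo_op (yosida n) (endo_op (yosida_exp n t) x)) (at t)"
  using has_vector_derivative_endo_apply[OF yosida_exp_has_vector_derivative(1)]
    has_vector_derivative_endo_apply[OF yosida_exp_has_vector_derivative(2)]
  by simp_all

lemma norm_yosida_exp [simp]: "norm (endo_op (yosida_exp n t) x) = norm x"
proof -
  have "norm (endo_op (yosida_exp n t) x) = norm (endo_op (yosida_exp n 0) x)"
    by (rule norm_const_of_orthogonal_derivative[OF yosida_exp_apply_has_vector_derivative(2)])
      (rule inner_yosida_self)
  then show ?thesis
    by simp
qed

lemma yosida_exp_lipschitz:
  "norm (endo_op (yosida_exp n t) x - endo_op (yosida_exp n s) x) \<le> norm (endo_op (yosida n) x) * \<bar>t - s\<bar>"
  by (rule norm_diff_le_vector_derivative_bound[OF yosida_exp_apply_has_vector_derivative(1)]) simp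

text \<open>Comparing two approximants: \<open>s \<mapsto> e\<^sup>s\<^sup>B\<^sup>n e\<^sup>(\<^sup>t\<^sup>-\<^sup>s\<^sup>)\<^sup>B\<^sup>m x\<close> has derivative
  \<open>e\<^sup>s\<^sup>B\<^sup>n e\<^sup>(\<^sup>t\<^sup>-\<^sup>s\<^sup>)\<^sup>B\<^sup>m (B\<^sub>n - B\<^sub>m) x\<close> because all these operators commute.\<close>

lemma yosida_exp_diff_le:
  "norm (endo_op (yosida_exp n t) x - endo_op (yosida_exp m t) x)
    \<le> norm (endo_op (yosida n) x - endo_op (yosida m) x) * \<bar>t\<bar>"
proof -
  define f where "f s = endo_op (yosida_exp n s * yosida_exp m (t - s)) x" for s
  define f' where "f' s = endo_op (yosida_exp n s * yosida_exp m (t - s))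
      (endo_op (yosida n) x - endo_op (yosida m) x)" for s
  have "(f has_vector_derivative f' s) (at s)" for s
  proof -
    have "((yosida_exp m \<circ> (\<lambda>s. t - s)) has_vector_derivative
        (- 1) *\<^sub>R (yosida_exp m (t - s) * yosida m)) (at s)"
      by (rule vector_diff_chain_at) (auto intro!: derivative_eq_intros yosida_exp_has_vector_derivative)
    then have "((\<lambda>s. yosida_exp m (t - s)) has_vector_derivative - (yosida_exp m (t - s) * yosida m)) (at s)"
      by (simp add: o_def)
    from has_vector_derivative_mult[OF yosida_exp_has_vector_derivative(1) this]
    have "((\<lambda>s. yosida_exp n s * yosida_exp m (t - s)) has_vector_derivative
        yosida_exp n s * - (yosida_exp m (t - s) * yosida m) + yosida_exp n s * yosida n * yosida_exp m (t - s))
        (at s)" .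
    moreover have "yosida_exp n s * yosida n * yosida_exp m (t - s) = yosida_exp n s * yosida_exp m (t - s) * yosida n"
      by (simp add: mult.assoc yosida_exp_commute_yosida[of m "t - s" n, symmetric])
    ultimately have "((\<lambda>s. yosida_exp n s * yosida_exp m (t - s)) has_vector_derivative
        yosida_exp n s * yosida_exp m (t - s) * (yosida n - yosida m)) (at s)"
      by (simp add: algebra_simps)
    from has_vector_derivative_endo_apply[OF this, of x] show ?thesis
      by (simp add: f_def[abs_def] f'_def blinfun.bilinear_simps)
  qed
  then have "norm (f t - f 0) \<le> norm (endo_op (yosida n) x - endo_op (yosida m) x) * \<bar>t - 0\<bar>"
    by (rule norm_diff_le_vector_derivative_bound) (simp add: f'_def)
  then show ?thesis
    by (simp add: f_def)
qed

text \<open>An \<open>\<epsilon>/3\<close> argument through D, using the estimate \<open>yosida_exp_diff_le\<close> on D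
  and the isometry of all \<open>e\<^sup>t\<^sup>B\<^sup>n\<close>.\<close>

lemma yosida_exp_uniformly_Cauchy:
  assumes "e > 0" and "T \<ge> 0"
  shows "\<exists>N. \<forall>n\<ge>N. \<forall>m\<ge>N. \<forall>t. \<bar>t\<bar> \<le> T \<longrightarrow>
    norm (endo_op (yosida_exp n t) x - endo_op (yosida_exp m t) x) < e"
proof -
  have "x \<in> closure D"
    by (simp add: dom_dense)
  then obtain d where "d \<in> D" and xd: "dist d x < e / 3"
    using \<open>e > 0\<close> unfolding closure_approachable by (meson zero_less_divide_iff zero_less_numeral)
  have "e / (3 * (T + 1)) > 0"
    using assms by simp
  then obtain N where N: "\<And>m n. m \<ge> N \<Longrightarrow> n \<ge> N \<Longrightarrow>
      dist (endo_op (yosida m) d) (endo_op (yosida n) d) < e / (3 * (T + 1))"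
    using metric_CauchyD[OF LIMSEQ_imp_Cauchy[OF yosida_tendsto[OF \<open>d \<in> D\<close>]]] by blast
  have "norm (endo_op (yosida_exp n t) x - endo_op (yosida_exp m t) x) < e"
    if "n \<ge> N" "m \<ge> N" "\<bar>t\<bar> \<le> T" for n m t
  proof -
    have "endo_op (yosida_exp n t) x - endo_op (yosida_exp m t) x
        = endo_op (yosida_exp n t) (x - d) + (endo_op (yosida_exp n t) d - endo_op (yosida_exp m t) d)
          + endo_op (yosida_exp m t) (d - x)"
      by (simp add: blinfun.bilinear_simps)
    then have "norm (endo_op (yosida_exp n t) x - endo_op (yosida_exp m t) x)
        \<le> norm (endo_op (yosida_exp n t) (x - d))
          + norm (endo_op (yosida_exp n t) d - endo_op (yosida_exp m t) d)
          + norm (endo_op (yosida_exp m t) (d - x))"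
      by (simp only: norm_triangle_add3)
    moreover have "norm (endo_op (yosida_exp n t) d - endo_op (yosida_exp m t) d) \<le> e / 3"
    proof -
      have "norm (endo_op (yosida n) d - endo_op (yosida m) d) \<le> e / (3 * (T + 1))"
        using N[OF that(1,2)] by (simp add: dist_norm)
      then have "norm (endo_op (yosida n) d - endo_op (yosida m) d) * \<bar>t\<bar> \<le> e / (3 * (T + 1)) * T"
        using that(3) assms by (intro mult_mono) auto
      also have "\<dots> \<le> e / 3"
        using assms by (simp add: field_simps)
      finally show ?thesis
        using yosida_exp_diff_le[of n t d m] by linarith
    qed
    ultimately show ?thesis
      using xd by (simp add: dist_norm norm_minus_commute)
  qed
  then show ?thesis
    by blast
qed

definition stone :: "real \<Rightarrow> 'a \<Rightarrow> 'a" where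
  "stone t x = lim (\<lambda>n. endo_op (yosida_exp n t) x)"

lemma tendsto_stone: "(\<lambda>n. endo_op (yosida_exp n t) x) \<longlonglongrightarrow> stone t x"
proof -
  have "Cauchy (\<lambda>n. endo_op (yosida_exp n t) x)"
  proof (rule metric_CauchyI)
    fix e :: real
    assume "e > 0"
    then show "\<exists>M. \<forall>m\<ge>M. \<forall>n\<ge>M. dist (endo_op (yosida_exp m t) x) (endo_op (yosida_exp n t) x) < e"
      using yosida_exp_uniformly_Cauchy[of e "\<bar>t\<bar>" x] by (auto simp: dist_norm)
  qed
  then show ?thesis
    unfolding stone_def by (simp add: Cauchy_convergent_iff convergent_LIMSEQ_iff)
qed

lemma yosida_exp_uniform_limit:
  assumes "e > 0"
  shows "\<forall>\<^sub>F n in sequentially. \<forall>t. \<bar>t\<bar> \<le> T \<longrightarrow> norm (endo_op (yosida_exp n t) x - stone t x) \<le> e"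
proof -
  obtain N where N: "\<forall>n\<ge>N. \<forall>m\<ge>N. \<forall>t. \<bar>t\<bar> \<le> max T 0 \<longrightarrow>
      norm (endo_op (yosida_exp n t) x - endo_op (yosida_exp m t) x) < e"
    using yosida_exp_uniformly_Cauchy[OF assms, of "max T 0" x] by auto
  have "norm (endo_op (yosida_exp n t) x - stone t x) \<le> e" if "n \<ge> N" "\<bar>t\<bar> \<le> T" for n t
  proof (rule tendsto_le[OF _ tendsto_const])
    show "(\<lambda>m. norm (endo_op (yosida_exp n t) x - endo_op (yosida_exp m t) x))
        \<longlonglongrightarrow> norm (endo_op (yosida_exp n t) x - stone t x)"
      by (intro tendsto_intros tendsto_stone)
    show "\<forall>\<^sub>F m in sequentially. norm (endo_op (yosida_exp n t) x - endo_op (yosida_exp m t) x) \<le> e"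
      using N that unfolding eventually_sequentially by (auto intro!: exI[of _ N] less_imp_le)
  qed simp
  then show ?thesis
    unfolding eventually_sequentially by blast
qed

lemma stone_add_right: "stone t (x + y) = stone t x + stone t y"
  and stone_scaleR_right: "stone t (r *\<^sub>R x) = r *\<^sub>R stone t x"
  and stone_scaleC_ii: "stone t (\<i> *\<^sub>C x) = \<i> *\<^sub>C stone t x"
  and norm_stone: "norm (stone t x) = norm x"
  and stone_zero: "stone 0 x = x"
  using tendsto_add[OF tendsto_stone[of t x] tendsto_stone[of t y]] tendsto_stone[of t "x + y"]
    tendsto_scaleR[OF tendsto_const[of r] tendsto_stone[of t x]] tendsto_stone[of t "r *\<^sub>R x"]
    bounded_linear.tendsto[OF bounded_linear_scaleC_ii tendsto_stone[of t x]]
    tendsto_stone[of t "\<i> *\<^sub>C x"] tendsto_norm[OF tendsto_stone[of t x]] tendsto_stone[of 0 x]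
  by (simp_all add: blinfun.bilinear_simps yosida_exp_scaleC_ii LIMSEQ_unique LIMSEQ_const_iff)

lemma stone_diff_right: "stone t (x - y) = stone t x - stone t y"
  using stone_add_right[of t "x - y" y] by (simp add: algebra_simps)

lemma bounded_linear_stone: "bounded_linear (stone t)"
  by (rule bounded_linear_intro[where K=1]) (simp_all add: stone_add_right stone_scaleR_right norm_stone)

lemma stone_scaleC_right: "stone t (a *\<^sub>C x) = a *\<^sub>C stone t x"
  by (simp add: scaleC_eq_Re_Im[of a x] scaleC_eq_Re_Im[of a "stone t x"] stone_add_right
      stone_scaleR_right stone_scaleC_ii)

lemma stone_add: "stone (s + t) x = stone s (stone t x)"
proof -
  have "\<forall>n. norm (endo_op (yosida_exp n s) (endo_op (yosida_exp n t) x) - stone s (stone t x))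
      \<le> norm (endo_op (yosida_exp n t) x - stone t x)
        + norm (endo_op (yosida_exp n s) (stone t x) - stone s (stone t x))"
  proof
    fix n
    have "endo_op (yosida_exp n s) (endo_op (yosida_exp n t) x) - stone s (stone t x)
        = endo_op (yosida_exp n s) (endo_op (yosida_exp n t) x - stone t x)
          + (endo_op (yosida_exp n s) (stone t x) - stone s (stone t x))"
      by (simp add: blinfun.bilinear_simps)
    then have "norm (endo_op (yosida_exp n s) (endo_op (yosida_exp n t) x) - stone s (stone t x))
        \<le> norm (endo_op (yosida_exp n s) (endo_op (yosida_exp n t) x - stone t x))
          + norm (endo_op (yosida_exp n s) (stone t x) - stone s (stone t x))"
      by (simp only: norm_triangle_ineq)
    then show "norm (endo_op (yosida_exp n s) (endo_op (yosida_exp n t) x) - stone s (stone t x))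
        \<le> norm (endo_op (yosida_exp n t) x - stone t x)
          + norm (endo_op (yosida_exp n s) (stone t x) - stone s (stone t x))"
      by simp
  qed
  moreover have "(\<lambda>n. norm (endo_op (yosida_exp n t) x - stone t x)
      + norm (endo_op (yosida_exp n s) (stone t x) - stone s (stone t x))) \<longlonglongrightarrow> 0"
    using tendsto_add[OF tendsto_norm_zero[OF LIM_zero[OF tendsto_stone]]
        tendsto_norm_zero[OF LIM_zero[OF tendsto_stone]]] by simp
  ultimately have "(\<lambda>n. endo_op (yosida_exp n s) (endo_op (yosida_exp n t) x) - stone s (stone t x))
      \<longlonglongrightarrow> 0"
    by (rule Lim_null_comparison[OF always_eventually])
  then have "(\<lambda>n. endo_op (yosida_exp n (s + t)) x) \<longlonglongrightarrow> stone s (stone t x)"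
    by (simp add: yosida_exp_add LIM_zero_cancel)
  then show ?thesis
    using tendsto_stone LIMSEQ_unique by blast
qed

lemma stone_lipschitz_on_dom:
  assumes "x \<in> D"
  shows "norm (stone t x - stone s x) \<le> norm (gen x) * \<bar>t - s\<bar>"
proof (rule tendsto_le[OF _ _ tendsto_norm[OF tendsto_diff[OF tendsto_stone tendsto_stone]]])
  show "(\<lambda>n. norm (endo_op (yosida n) x) * \<bar>t - s\<bar>) \<longlonglongrightarrow> norm (gen x) * \<bar>t - s\<bar>"
    by (intro tendsto_intros yosida_tendsto assms)
  show "\<forall>\<^sub>F n in sequentially.
      norm (endo_op (yosida_exp n t) x - endo_op (yosida_exp n s) x) \<le> norm (endo_op (yosida n) x) * \<bar>t - s\<bar>"
    by (intro always_eventually allI yosida_exp_lipschitz)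
qed simp

lemma isCont_stone: "isCont (\<lambda>t. stone t x) s"
  unfolding continuous_at_eps_delta
proof (intro allI impI)
  fix e :: real
  assume "e > 0"
  have "x \<in> closure D"
    by (simp add: dom_dense)
  then obtain d where "d \<in> D" and xd: "dist d x < e / 3"
    using \<open>e > 0\<close> unfolding closure_approachable by (meson zero_less_divide_iff zero_less_numeral)
  define \<delta> where "\<delta> = e / (3 * (norm (gen d) + 1))"
  have "\<delta> > 0"
    using \<open>e > 0\<close> by (simp add: \<delta>_def add_nonneg_pos)
  have "dist (stone t x) (stone s x) < e" if "dist t s < \<delta>" for t
  proof -
    have "stone t x - stone s x = stone t (x - d) + (stone t d - stone s d) + stone s (d - x)"
      by (simp add: stone_diff_right)
    then have "norm (stone t x - stone s x)
        \<le> norm (stone t (x - d)) + norm (stone t d - stone s d) + norm (stone s (d - x))"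
      by (simp only: norm_triangle_add3)
    moreover have "norm (stone t d - stone s d) \<le> e / 3"
    proof -
      have "norm (gen d) * \<bar>t - s\<bar> \<le> norm (gen d) * \<delta>"
        using that by (intro mult_left_mono) (simp_all add: dist_real_def)
      also have "\<dots> = e / 3 * (norm (gen d) / (norm (gen d) + 1))"
        by (simp add: \<delta>_def)
      also have "\<dots> \<le> e / 3"
        using \<open>e > 0\<close> by (intro mult_left_le) (simp_all add: divide_le_eq_1 add_nonneg_pos)
      finally show ?thesis
        using stone_lipschitz_on_dom[OF \<open>d \<in> D\<close>, of t s] by linarith
    qed
    ultimately show ?thesis
      using xd by (simp add: dist_norm norm_minus_commute norm_stone)
  qed
  with \<open>\<delta> > 0\<close> show "\<exists>\<delta>>0. \<forall>t. dist t s < \<delta> \<longrightarrow> dist (stone t x) (stone s x) < e"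
    by blast
qed

text \<open>On D, \<open>e\<^sup>t\<^sup>B\<^sup>n x - x - t B\<^sub>n x\<close> is controlled by the variation of \<open>e\<^sup>s\<^sup>B\<^sup>n B\<^sub>n x\<close> along
  \<open>[0, t]\<close>; in the limit this becomes the variation of \<open>stone s (gen x)\<close>.\<close>

lemma norm_yosida_exp_minus_linear_le:
  assumes "\<And>s. s \<in> closed_segment 0 t \<Longrightarrow>
    norm (endo_op (yosida_exp n s) (endo_op (yosida n) x) - endo_op (yosida n) x) \<le> K"
  shows "norm (endo_op (yosida_exp n t) x - x - t *\<^sub>R endo_op (yosida n) x) \<le> K * \<bar>t\<bar>"
proof -
  define b where "b = endo_op (yosida n) x"
  have "norm ((endo_op (yosida_exp n t) x - t *\<^sub>R b) - (endo_op (yosida_exp n 0) x - 0 *\<^sub>R b))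
      \<le> K * \<bar>t - 0\<bar>"
  proof (rule norm_diff_le_vector_derivative_bound)
    show "((\<lambda>s. endo_op (yosida_exp n s) x - s *\<^sub>R b) has_vector_derivative
        endo_op (yosida_exp n s) b - b) (at s)" for s
      unfolding b_def by (auto intro!: derivative_eq_intros yosida_exp_apply_has_vector_derivative(1))
  qed (use assms in \<open>simp add: b_def\<close>)
  then show ?thesis
    by (simp add: b_def algebra_simps)
qed

lemma norm_yosida_exp_apply_minus_le:
  "norm (endo_op (yosida_exp n s) b - b)
    \<le> 2 * norm (b - a) + norm (endo_op (yosida_exp n s) a - stone s a) + norm (stone s a - a)"
proof -
  have "endo_op (yosida_exp n s) b - b = endo_op (yosida_exp n s) (b - a)
      + (endo_op (yosida_exp n s) a - stone s a) + (stone s a - a) + (a - b)"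
    by (simp add: blinfun.bilinear_simps)
  then have "norm (endo_op (yosida_exp n s) b - b) \<le> norm (endo_op (yosida_exp n s) (b - a))
      + norm (endo_op (yosida_exp n s) a - stone s a) + norm (stone s a - a) + norm (a - b)"
    by (simp only: norm_triangle_add4)
  then show ?thesis
    by (simp add: norm_minus_commute)
qed

lemma norm_stone_minus_linear_le:
  assumes x: "x \<in> D"
    and bound: "\<And>s. s \<in> closed_segment 0 t \<Longrightarrow> norm (stone s (gen x) - gen x) \<le> K"
  shows "norm (stone t x - x - t *\<^sub>R gen x) \<le> K * \<bar>t\<bar>"
proof -
  have approx: "norm (stone t x - x - t *\<^sub>R gen x) \<le> (K + 3 * \<delta>) * \<bar>t\<bar>" if "\<delta> > 0" for \<delta>
  proof (rule tendsto_le[OF _ tendsto_const])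
    show "(\<lambda>n. norm (endo_op (yosida_exp n t) x - x - t *\<^sub>R endo_op (yosida n) x))
        \<longlonglongrightarrow> norm (stone t x - x - t *\<^sub>R gen x)"
      by (intro tendsto_intros tendsto_stone yosida_tendsto x)
    show "\<forall>\<^sub>F n in sequentially.
        norm (endo_op (yosida_exp n t) x - x - t *\<^sub>R endo_op (yosida n) x) \<le> (K + 3 * \<delta>) * \<bar>t\<bar>"
      using tendstoD[OF yosida_tendsto[OF x] \<open>\<delta> > 0\<close>]
        yosida_exp_uniform_limit[OF \<open>\<delta> > 0\<close>, of "\<bar>t\<bar>" "gen x"]
    proof eventually_elim
      case (elim n)
      show ?case
      proof (rule norm_yosida_exp_minus_linear_le)
        fix s
        assume s: "s \<in> closed_segment 0 t"
        then have "norm (endo_op (yosida_exp n s) (gen x) - stone s (gen x)) \<le> \<delta>"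
          using elim(2) by (auto simp: closed_segment_eq_real_ivl split: if_splits)
        then show "norm (endo_op (yosida_exp n s) (endo_op (yosida n) x) - endo_op (yosida n) x)
            \<le> K + 3 * \<delta>"
          using norm_yosida_exp_apply_minus_le[of n s "endo_op (yosida n) x" "gen x"] elim(1) bound[OF s]
          by (simp add: dist_norm)
      qed
    qed
  qed simp
  have "(\<lambda>n. (K + 3 * (1 / Suc n)) * \<bar>t\<bar>) \<longlonglongrightarrow> (K + 3 * 0) * \<bar>t\<bar>"
    by (intro tendsto_intros lim_1_over_n[THEN LIMSEQ_Suc])
  then have lim: "(\<lambda>n. (K + 3 * (1 / Suc n)) * \<bar>t\<bar>) \<longlonglongrightarrow> K * \<bar>t\<bar>"
    by simp
  show ?thesis
  proof (rule tendsto_le[OF _ lim tendsto_const])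
    show "\<forall>\<^sub>F n in sequentially. norm (stone t x - x - t *\<^sub>R gen x) \<le> (K + 3 * (1 / Suc n)) * \<bar>t\<bar>"
      by (intro always_eventually allI approx) simp
  qed simp
qed

lemma stone_has_vector_derivative:
  assumes "x \<in> D"
  shows "((\<lambda>t. stone t x) has_vector_derivative gen x) (at 0)"
  unfolding has_vector_derivative_def has_derivative_at_alt
proof (intro conjI allI impI)
  show "bounded_linear (\<lambda>t. t *\<^sub>R gen x)"
    by (rule bounded_linear_scaleR_left)
  fix e :: real
  assume "e > 0"
  then obtain \<delta> where "\<delta> > 0" and \<delta>: "\<And>s. dist s 0 < \<delta> \<Longrightarrow> dist (stone s (gen x)) (stone 0 (gen x)) < e"
    using isCont_stone[where x="gen x" and s=0] unfolding continuous_at_eps_delta by blast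
  have "norm (stone t x - stone 0 x - (t - 0) *\<^sub>R gen x) \<le> e * norm (t - 0)" if "norm (t - 0) < \<delta>" for t
  proof -
    have "norm (stone s (gen x) - gen x) \<le> e" if "s \<in> closed_segment 0 t" for s
    proof -
      have "\<bar>s\<bar> \<le> \<bar>t\<bar>"
        using that by (auto simp: closed_segment_eq_real_ivl split: if_splits)
      then show ?thesis
        using \<delta>[of s] \<open>norm (t - 0) < \<delta>\<close> by (simp add: dist_norm stone_zero)
    qed
    from norm_stone_minus_linear_le[OF assms this] show ?thesis
      by (simp add: stone_zero mult.commute)
  qed
  with \<open>\<delta> > 0\<close> show "\<exists>\<delta>>0. \<forall>t. norm (t - 0) < \<delta> \<longrightarrow>
      norm (stone t x - stone 0 x - (t - 0) *\<^sub>R gen x) \<le> e * norm (t - 0)"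
    by blast
qed

text \<open>Conversely, if \<open>t \<mapsto> stone t x\<close> is differentiable at 0 with derivative v, write
  \<open>x = z + w\<close> with \<open>z = (1 - A)\<^sup>-\<^sup>1 (x - v) \<in> D\<close>; then w satisfies \<open>w' = w\<close>, which
  contradicts isometry unless \<open>w = 0\<close>.\<close>

lemma differentiable_stone_imp_dom:
  assumes "(\<lambda>t. stone t x) differentiable (at 0)"
  shows "x \<in> D"
proof -
  obtain v where v: "((\<lambda>t. stone t x) has_vector_derivative v) (at 0)"
    using assms vector_derivative_works by blast
  define z where "z = resolvent 1 (x - v)"
  have "z \<in> D" and gen_z: "gen z = z - (x - v)"
    using resolvent_in_dom[of 1] gen_resolvent[of 1] by (simp_all add: z_def)
  have "((\<lambda>t. stone t x - stone t z) has_vector_derivative v - gen z) (at 0)"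
    by (rule has_vector_derivative_diff[OF v stone_has_vector_derivative[OF \<open>z \<in> D\<close>]])
  then have "((\<lambda>t. stone t (x - z)) has_vector_derivative x - z) (at 0)"
    by (simp add: stone_diff_right gen_z algebra_simps)
  then have "inner (x - z) (stone 0 (x - z)) = 0"
    by (rule norm_const_imp_vector_derivative_orthogonal[rotated]) (simp add: norm_stone)
  then show ?thesis
    using \<open>z \<in> D\<close> by (simp add: stone_zero)
qed

end

section \<open>Unitary groups and their generators\<close>

lemma unitary_group_apply_add: "unitary_group U \<Longrightarrow> U (s + t) x = U s (U t x)"
  and unitary_group_apply_zero: "unitary_group U \<Longrightarrow> U 0 x = x"
  and norm_unitary_group_apply: "unitary_group U \<Longrightarrow> norm (U t x) = norm x"
  and unitary_group_apply_scaleC: "unitary_group U \<Longrightarrow> U t (a *\<^sub>C x) = a *\<^sub>C U t x"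
  by (simp_all add: unitary_group_def unitary_op_def)

lemma unitary_group_apply_minus_left: "unitary_group U \<Longrightarrow> U (- t) (U t x) = x"
  using unitary_group_apply_add[of U "- t" t x] unitary_group_apply_zero[of U x] by simp

lemma isCont_unitary_group_apply: "unitary_group U \<Longrightarrow> isCont (\<lambda>t. U t x) s"
  by (simp add: unitary_group_def continuous_on_eq_continuous_at)

lemma generated_by_has_vector_derivative:
  "generated_by U D h \<Longrightarrow> x \<in> D \<Longrightarrow> ((\<lambda>t. U t x) has_vector_derivative \<i> *\<^sub>C h x) (at 0)"
  by (simp add: generated_by_def)

lemma generated_by_dom_iff:
  "generated_by U D h \<Longrightarrow> x \<in> D \<longleftrightarrow> (\<lambda>t. U t x) differentiable (at 0)"
  by (auto simp: generated_by_def)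

lemma generated_by_has_vector_derivative_at:
  assumes U: "unitary_group U" "generated_by U D h" and "x \<in> D"
  shows "((\<lambda>t. U t x) has_vector_derivative U s (\<i> *\<^sub>C h x)) (at s)"
proof -
  have "((\<lambda>t. U s (U (t - s) x)) has_vector_derivative U s (\<i> *\<^sub>C h x)) (at s)"
    by (intro bounded_linear.has_vector_derivative[OF blinfun.bounded_linear_right]
        has_vector_derivative_shift generated_by_has_vector_derivative[OF U(2) \<open>x \<in> D\<close>])
  then show ?thesis
    by (simp add: unitary_group_apply_add[OF U(1), symmetric])
qed

lemma generated_by_invariant:
  assumes U: "unitary_group U" "generated_by U D h" and "x \<in> D"
  shows "U s x \<in> D" and "h (U s x) = U s (h x)"
proof -
  have "((\<lambda>t. U s (U t x)) has_vector_derivative U s (\<i> *\<^sub>C h x)) (at 0)"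
    by (intro bounded_linear.has_vector_derivative[OF blinfun.bounded_linear_right]
        generated_by_has_vector_derivative[OF U(2) \<open>x \<in> D\<close>])
  moreover have "U s (U t x) = U t (U s x)" for t
    using unitary_group_apply_add[OF U(1), of s t x] unitary_group_apply_add[OF U(1), of t s x]
    by (simp add: add.commute)
  ultimately have deriv: "((\<lambda>t. U t (U s x)) has_vector_derivative U s (\<i> *\<^sub>C h x)) (at 0)"
    by simp
  then show "U s x \<in> D"
    using generated_by_dom_iff[OF U(2)] differentiableI_vector by blast
  then have "\<i> *\<^sub>C h (U s x) = U s (\<i> *\<^sub>C h x)"
    using vector_derivative_unique_at[OF generated_by_has_vector_derivative[OF U(2)] deriv] by blast
  then show "h (U s x) = U s (h x)"
    by (simp add: unitary_group_apply_scaleC[OF U(1)] scaleC_ii_cancel)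
qed

context self_adjoint
begin

definition stone_op :: "real \<Rightarrow> 'a \<Rightarrow>\<^sub>L 'a" where
  "stone_op t = Blinfun (stone t)"

lemma stone_op_apply [simp]: "stone_op t x = stone t x"
  by (simp add: stone_op_def bounded_linear_Blinfun_apply bounded_linear_stone)

lemma unitary_group_stone_op: "unitary_group stone_op"
  unfolding unitary_group_def unitary_op_def
proof (intro conjI allI)
  show "surj (blinfun_apply (stone_op t))" for t
    by (rule surjI[of _ "stone (- t)"]) (simp add: stone_add[symmetric] stone_zero)
  show "stone_op 0 = id_blinfun" "stone_op (s + t) = stone_op s o\<^sub>L stone_op t" for s t
    by (auto intro!: blinfun_eqI simp: stone_zero stone_add)
  show "continuous_on UNIV (\<lambda>t. stone_op t x)" for x
    by (simp add: continuous_at_imp_continuous_on isCont_stone)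
qed (simp_all add: stone_scaleC_right norm_stone)

lemma generated_by_stone_op: "generated_by stone_op D h"
  unfolding generated_by_def
  using stone_has_vector_derivative differentiable_stone_imp_dom
  by (auto simp: gen_def intro: differentiableI_vector)

text \<open>Uniqueness: the difference of two such groups applied to \<open>x \<in> D\<close> stays in D and solves
  \<open>e' = \<i> h e\<close>, so its norm is constant by skewness and hence 0.\<close>

lemma generated_by_unique:
  assumes U: "unitary_group U" "generated_by U D h"
    and V: "unitary_group V" "generated_by V D h"
  shows "U = V"
proof
  fix s
  have "U s x = V s x" if "x \<in> D" for x
  proof -
    define e where "e t = U t x - V t x" for t
    have "e t \<in> D" for t
      using generated_by_invariant(1)[OF U \<open>x \<in> D\<close>] generated_by_invariant(1)[OF V \<open>x \<in> D\<close>]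
      by (simp add: e_def dom_diff)
    have "(e has_vector_derivative gen (e t)) (at t)" for t
    proof -
      have "(e has_vector_derivative U t (\<i> *\<^sub>C h x) - V t (\<i> *\<^sub>C h x)) (at t)"
        unfolding e_def[abs_def]
        by (intro has_vector_derivative_diff generated_by_has_vector_derivative_at[OF U \<open>x \<in> D\<close>]
            generated_by_has_vector_derivative_at[OF V \<open>x \<in> D\<close>])
      moreover have "U t (\<i> *\<^sub>C h x) - V t (\<i> *\<^sub>C h x) = gen (e t)"
        using generated_by_invariant[OF U \<open>x \<in> D\<close>, of t] generated_by_invariant[OF V \<open>x \<in> D\<close>, of t]
        by (simp add: e_def gen_def op_diff unitary_group_apply_scaleC U(1) V(1) scaleC_diff_right)
      ultimately show ?thesis
        by simp
    qed
    then have "norm (e s) = norm (e 0)"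
      by (rule norm_const_of_orthogonal_derivative) (rule inner_gen_self[OF \<open>e _ \<in> D\<close>])
    then show ?thesis
      by (simp add: e_def unitary_group_apply_zero U(1) V(1))
  qed
  then show "U s = V s"
  proof (intro blinfun_eqI dense_imp_closed_property[OF dom_dense, where P="\<lambda>x. U s x = V s x"])
    show "closed {x. U s x = V s x}"
      by (intro closed_Collect_eq continuous_intros)
  qed auto
qed

lemma exp_ith: "unitary_group (exp_ith D h) \<and> generated_by (exp_ith D h) D h"
  unfolding exp_ith_def
  by (rule theI[of _ stone_op])
    (use unitary_group_stone_op generated_by_stone_op generated_by_unique in blast)+

end

section \<open>Differentiability of \<open>e\<^sup>i\<^sup>t\<^sup>h e\<^sup>-\<^sup>i\<^sup>t\<^sup>k\<close>\<close>

lemma differentiable_blinfun_apply: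
  "W differentiable F \<Longrightarrow> (\<lambda>t. blinfun_apply (W t) x) differentiable F"
  unfolding differentiable_def
  using bounded_linear.has_derivative[OF blinfun.bounded_linear_left] by blast

lemma has_vector_derivative_on_common_dom:
  assumes U: "unitary_group U" "generated_by U Dh h"
    and V: "unitary_group V" "generated_by V Dk k"
    and "\<xi> \<in> Dh" "\<xi> \<in> Dk"
  shows "((\<lambda>t. U t (V (- t) \<xi>)) has_vector_derivative \<i> *\<^sub>C h \<xi> - \<i> *\<^sub>C k \<xi>) (at 0)"
  using has_vector_derivative_contraction_apply[where W=U,
      OF _ _ generated_by_has_vector_derivative[OF U(2) \<open>\<xi> \<in> Dh\<close>]
      has_vector_derivative_reflect_0[OF generated_by_has_vector_derivative[OF V(2) \<open>\<xi> \<in> Dk\<close>]]]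
  by (simp add: norm_unitary_group_apply unitary_group_apply_zero isCont_unitary_group_apply U(1) V(1))

lemma strong_derivative_bounded:
  fixes W :: "real \<Rightarrow> 'a::{real_normed_vector,complete_space} \<Rightarrow>\<^sub>L 'a"
  assumes W0: "\<And>x. W 0 x = x"
    and deriv: "\<And>x. ((\<lambda>t. W t x) has_vector_derivative T x) (at 0)"
  shows "\<exists>M. \<forall>x. norm (T x) \<le> M * norm x"
proof -
  define S where "S n x = real (Suc n) *\<^sub>R (W (1 / real (Suc n)) x - x)" for n x
  have S: "(\<lambda>n. S n x) \<longlonglongrightarrow> T x" for x
    using difference_quotient_tendsto[OF deriv[of x]] by (simp add: S_def W0)
  have "\<exists>M. \<forall>n x. norm (S n x) \<le> M * norm x"
  proof (rule uniform_boundedness)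
    show "bounded_linear (S n)" for n
      unfolding S_def
      by (intro bounded_linear_const_scaleR bounded_linear_sub blinfun.bounded_linear_right
          bounded_linear_ident)
    show "\<exists>B. \<forall>n. norm (S n x) \<le> B" for x
      using convergent_imp_Bseq[of "\<lambda>n. S n x"] S[of x] unfolding Bseq_def convergent_def by fastforce
  qed
  then obtain M where "\<And>n x. norm (S n x) \<le> M * norm x"
    by blast
  then have "norm (T x) \<le> M * norm x" for x
    by (intro tendsto_le[OF _ tendsto_const tendsto_norm[OF S]]) auto
  then show ?thesis
    by blast
qed

text \<open>Write \<open>w t = U t V (- t)\<close>. For \<open>\<xi> \<in> D\<^sub>k\<close> we have \<open>U t \<xi> = w t (V t \<xi>)\<close>, and for
  \<open>\<xi> \<in> D\<^sub>h\<close> we have \<open>V (- t) \<xi> = U (- t) (w t \<xi>)\<close>; the product rule makes the right-hand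
  sides differentiable, so each domain contains the other.\<close>

lemma strongly_differentiable_imp_dom_eq:
  assumes U: "unitary_group U" "generated_by U Dh h"
    and V: "unitary_group V" "generated_by V Dk k"
    and T: "\<And>\<xi>. ((\<lambda>t. U t (V (- t) \<xi>)) has_vector_derivative T \<xi>) (at 0)"
  shows "Dh = Dk" and "\<And>\<xi>. \<xi> \<in> Dh \<Longrightarrow> \<i> *\<^sub>C h \<xi> - \<i> *\<^sub>C k \<xi> = T \<xi>"
proof -
  have w_cont: "isCont (\<lambda>t. U t (V (- t) y)) 0" for y
    using T[of y] by (simp add: differentiableI_vector differentiable_imp_continuous_within)
  have "\<xi> \<in> Dh" and "\<i> *\<^sub>C h \<xi> = T \<xi> + \<i> *\<^sub>C k \<xi>" if "\<xi> \<in> Dk" for \<xi>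
  proof -
    have "((\<lambda>t. (U t o\<^sub>L V (- t)) (V t \<xi>)) has_vector_derivative T \<xi> + \<i> *\<^sub>C k \<xi>) (at 0)"
      by (rule has_vector_derivative_contraction_apply[OF _ _ _
            generated_by_has_vector_derivative[OF V(2) that]])
        (simp_all add: T w_cont norm_unitary_group_apply unitary_group_apply_zero U(1) V(1))
    then have deriv: "((\<lambda>t. U t \<xi>) has_vector_derivative T \<xi> + \<i> *\<^sub>C k \<xi>) (at 0)"
      by (simp add: unitary_group_apply_minus_left V(1))
    then show "\<xi> \<in> Dh"
      using generated_by_dom_iff[OF U(2)] differentiableI_vector by blast
    with deriv show "\<i> *\<^sub>C h \<xi> = T \<xi> + \<i> *\<^sub>C k \<xi>"
      using vector_derivative_unique_at generated_by_has_vector_derivative[OF U(2)] by blast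
  qed
  moreover have "\<xi> \<in> Dk" if "\<xi> \<in> Dh" for \<xi>
  proof -
    have "isCont (\<lambda>t. U t (T \<xi>)) (- 0)"
      by (rule isCont_unitary_group_apply[OF U(1)])
    then have "isCont (\<lambda>t. U (- t) (T \<xi>)) 0"
      by (intro isCont_o2[where f=uminus and g="\<lambda>t. U t (T \<xi>)"]) (auto intro: continuous_intros)
    then have "((\<lambda>t. U (- t) (U t (V (- t) \<xi>))) has_vector_derivative - (\<i> *\<^sub>C h \<xi>) + T \<xi>) (at 0)"
      by (intro has_vector_derivative_contraction_apply[where W="\<lambda>t. U (- t)", OF _ _
            has_vector_derivative_reflect_0[OF generated_by_has_vector_derivative[OF U(2) that]] T])
        (simp_all add: norm_unitary_group_apply unitary_group_apply_zero U(1) V(1))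
    then have "((\<lambda>t. V (- t) \<xi>) has_vector_derivative - (\<i> *\<^sub>C h \<xi>) + T \<xi>) (at 0)"
      by (simp add: unitary_group_apply_minus_left[OF U(1)])
    from has_vector_derivative_reflect_0[OF this] show "\<xi> \<in> Dk"
      using generated_by_dom_iff[OF V(2)] differentiableI_vector by fastforce
  qed
  ultimately show "Dh = Dk" and "\<And>\<xi>. \<xi> \<in> Dh \<Longrightarrow> \<i> *\<^sub>C h \<xi> - \<i> *\<^sub>C k \<xi> = T \<xi>"
    by (auto simp: algebra_simps)
qed

lemma strongly_differentiable_imp_bounded_difference:
  fixes U V :: "real \<Rightarrow> 'a::{complex_inner,complete_space} \<Rightarrow>\<^sub>L 'a"
  assumes U: "unitary_group U" "generated_by U Dh h"
    and V: "unitary_group V" "generated_by V Dk k"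
    and diff: "\<forall>\<xi>. (\<lambda>t. (U t o\<^sub>L V (- t)) \<xi>) differentiable (at 0)"
  shows "Dh = Dk \<and> (\<exists>C. \<forall>\<xi>\<in>Dh. norm (h \<xi> - k \<xi>) \<le> C * norm \<xi>)"
proof -
  define T where "T \<xi> = vector_derivative (\<lambda>t. U t (V (- t) \<xi>)) (at 0)" for \<xi>
  have T: "((\<lambda>t. (U t o\<^sub>L V (- t)) \<xi>) has_vector_derivative T \<xi>) (at 0)" for \<xi>
    using vector_derivative_works[THEN iffD1, OF diff[rule_format, of \<xi>]] by (simp add: T_def)
  obtain M where "\<And>\<xi>. norm (T \<xi>) \<le> M * norm \<xi>"
    using strong_derivative_bounded[of "\<lambda>t. U t o\<^sub>L V (- t)", OF _ T]
    by (auto simp: unitary_group_apply_zero U(1) V(1))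
  moreover note strongly_differentiable_imp_dom_eq[OF U V T[simplified]]
  ultimately show ?thesis
    by (metis norm_scaleC_ii scaleC_diff_right)
qed

lemma has_vector_derivative_interaction:
  assumes U: "unitary_group U" "generated_by U Dh h"
    and V: "unitary_group V" "generated_by V Dk k"
    and "V (- s) \<xi> \<in> Dh" "V (- s) \<xi> \<in> Dk"
  shows "((\<lambda>t. U t (V (- t) \<xi>)) has_vector_derivative
    U s (\<i> *\<^sub>C h (V (- s) \<xi>) - \<i> *\<^sub>C k (V (- s) \<xi>))) (at s)"
proof -
  define \<eta> where "\<eta> = V (- s) \<xi>"
  from has_vector_derivative_shift[OF has_vector_derivative_on_common_dom[OF U V assms(5,6)], of s]
  have "((\<lambda>t. U s (U (t - s) (V (- (t - s)) \<eta>))) has_vector_derivative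
      U s (\<i> *\<^sub>C h \<eta> - \<i> *\<^sub>C k \<eta>)) (at s)"
    unfolding \<eta>_def by (rule bounded_linear.has_vector_derivative[OF blinfun.bounded_linear_right])
  moreover have "U s (U (t - s) (V (- (t - s)) \<eta>)) = U t (V (- t) \<xi>)" for t
    using unitary_group_apply_add[OF U(1), of s "t - s"]
      unitary_group_apply_add[OF V(1), of "- (t - s)" "- s" \<xi>]
    by (simp add: \<eta>_def)
  ultimately show ?thesis
    by (simp add: \<eta>_def)
qed

lemma norm_interaction_diff_le_on_core:
  assumes U: "unitary_group U" "generated_by U Dh h"
    and V: "unitary_group V" "generated_by V Dk k"
    and D: "D \<subseteq> Dh \<inter> Dk" "\<forall>t. \<forall>\<xi>\<in>D. V t \<xi> \<in> D"
    and C: "\<forall>\<xi>\<in>D. norm (h \<xi> - k \<xi>) \<le> C * norm \<xi>"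
    and "\<xi> \<in> D"
  shows "norm (U t (V (- t) \<xi>) - U s (V (- s) \<xi>)) \<le> \<bar>C\<bar> * norm \<xi> * \<bar>t - s\<bar>"
proof (rule norm_diff_le_vector_derivative_bound)
  fix \<sigma>
  have "V (- \<sigma>) \<xi> \<in> D"
    using D(2) \<open>\<xi> \<in> D\<close> by blast
  then show "((\<lambda>t. U t (V (- t) \<xi>)) has_vector_derivative
      U \<sigma> (\<i> *\<^sub>C h (V (- \<sigma>) \<xi>) - \<i> *\<^sub>C k (V (- \<sigma>) \<xi>))) (at \<sigma>)"
    using D(1) by (intro has_vector_derivative_interaction[OF U V]) auto
  have "norm (U \<sigma> (\<i> *\<^sub>C h (V (- \<sigma>) \<xi>) - \<i> *\<^sub>C k (V (- \<sigma>) \<xi>)))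
      = norm (h (V (- \<sigma>) \<xi>) - k (V (- \<sigma>) \<xi>))"
    by (simp add: norm_unitary_group_apply U(1) scaleC_diff_right[symmetric])
  also have "\<dots> \<le> C * norm (V (- \<sigma>) \<xi>)"
    using C \<open>V (- \<sigma>) \<xi> \<in> D\<close> by blast
  also have "\<dots> \<le> \<bar>C\<bar> * norm \<xi>"
    by (simp add: norm_unitary_group_apply V(1) mult_right_mono)
  finally show "norm (U \<sigma> (\<i> *\<^sub>C h (V (- \<sigma>) \<xi>) - \<i> *\<^sub>C k (V (- \<sigma>) \<xi>))) \<le> \<bar>C\<bar> * norm \<xi>" .
qed

lemma invariant_core_imp_lipschitz:
  fixes U V :: "real \<Rightarrow> 'a::{complex_inner,complete_space} \<Rightarrow>\<^sub>L 'a"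
  assumes U: "unitary_group U" "generated_by U Dh h"
    and V: "unitary_group V" "generated_by V Dk k"
    and D: "closure D = UNIV" "D \<subseteq> Dh \<inter> Dk" "\<forall>t. \<forall>\<xi>\<in>D. V t \<xi> \<in> D"
    and C: "\<forall>\<xi>\<in>D. norm (h \<xi> - k \<xi>) \<le> C * norm \<xi>"
  shows "\<bar>C\<bar>-lipschitz_on UNIV (\<lambda>t. U t o\<^sub>L V (- t))"
proof (rule lipschitz_onI)
  fix t s :: real
  have "norm ((U t o\<^sub>L V (- t)) \<xi> - (U s o\<^sub>L V (- s)) \<xi>) \<le> \<bar>C\<bar> * \<bar>t - s\<bar> * norm \<xi>" for \<xi>
  proof (rule dense_imp_closed_property[OF D(1), where P="\<lambda>\<xi>. norm ((U t o\<^sub>L V (- t)) \<xi> - (U s o\<^sub>L V (- s)) \<xi>) \<le> \<bar>C\<bar> * \<bar>t - s\<bar> * norm \<xi>"])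
    show "closed {\<xi>. norm ((U t o\<^sub>L V (- t)) \<xi> - (U s o\<^sub>L V (- s)) \<xi>) \<le> \<bar>C\<bar> * \<bar>t - s\<bar> * norm \<xi>}"
      by (intro closed_Collect_le continuous_intros)
    show "\<forall>\<xi>\<in>D. norm ((U t o\<^sub>L V (- t)) \<xi> - (U s o\<^sub>L V (- s)) \<xi>) \<le> \<bar>C\<bar> * \<bar>t - s\<bar> * norm \<xi>"
      using norm_interaction_diff_le_on_core[OF U V D(2,3) C] by (simp add: mult_ac)
  qed
  then have "norm ((U t o\<^sub>L V (- t)) - (U s o\<^sub>L V (- s))) \<le> \<bar>C\<bar> * \<bar>t - s\<bar>"
    by (intro norm_blinfun_bound) (simp_all add: blinfun.bilinear_simps)
  then show "dist (U t o\<^sub>L V (- t)) (U s o\<^sub>L V (- s)) \<le> \<bar>C\<bar> * dist t s"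
    by (simp add: dist_norm dist_real_def)
qed simp

theorem lemma8p1p1:
  fixes Dh Dk :: "'a::{complex_inner, complete_space} set"
    and h k :: "'a \<Rightarrow> 'a"
  assumes sep: "separable_space TYPE('a)"
    and sa_h: "self_adjoint_op Dh h"
    and sa_k: "self_adjoint_op Dk k"
  defines "w \<equiv> w_op Dh h Dk k"
  shows "(w differentiable (at 0) \<longrightarrow> (\<forall>\<xi>. (\<lambda>t. w t \<xi>) differentiable (at 0)))
    \<and> ((\<forall>\<xi>. (\<lambda>t. w t \<xi>) differentiable (at 0)) \<longrightarrow>
         (Dh = Dk \<and> (\<exists>C. \<forall>\<xi>\<in>Dh. norm (h \<xi> - k \<xi>) \<le> C * norm \<xi>)))
    \<and> ((Dh = Dk \<and> (\<exists>C. \<forall>\<xi>\<in>Dh. norm (h \<xi> - k \<xi>) \<le> C * norm \<xi>)) \<longrightarrow>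
         (\<exists>D. csubspace D \<and> closure D = UNIV \<and> D \<subseteq> Dh \<inter> Dk
            \<and> (\<exists>C. \<forall>\<xi>\<in>D. norm (h \<xi> - k \<xi>) \<le> C * norm \<xi>)
            \<and> (\<forall>t. \<forall>\<xi>\<in>D. exp_ith Dk k t \<xi> \<in> D)))
    \<and> ((\<exists>D. csubspace D \<and> closure D = UNIV \<and> D \<subseteq> Dh \<inter> Dk
            \<and> (\<exists>C. \<forall>\<xi>\<in>D. norm (h \<xi> - k \<xi>) \<le> C * norm \<xi>)
            \<and> (\<forall>t. \<forall>\<xi>\<in>D. exp_ith Dk k t \<xi> \<in> D)) \<longrightarrow>
         (\<exists>L. L-lipschitz_on UNIV w))"
proof -
  interpret H: self_adjoint Dh h
    by unfold_locales (rule sa_h)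
  interpret K: self_adjoint Dk k
    by unfold_locales (rule sa_k)
  define U V where "U = exp_ith Dh h" and "V = exp_ith Dk k"
  have U: "unitary_group U" "generated_by U Dh h" and V: "unitary_group V" "generated_by V Dk k"
    using H.exp_ith K.exp_ith by (simp_all add: U_def V_def)
  have w: "w = (\<lambda>t. U t o\<^sub>L V (- t))"
    by (simp add: w_def w_op_def U_def V_def fun_eq_iff)
  have "\<forall>t. \<forall>\<xi>\<in>Dk. V t \<xi> \<in> Dk"
    using generated_by_invariant(1)[OF V] by blast
  then show ?thesis
    unfolding w V_def[symmetric]
  proof (intro conjI impI)
  qed (use differentiable_blinfun_apply strongly_differentiable_imp_bounded_difference[OF U V]
      invariant_core_imp_lipschitz[OF U V] H.dom_csubspace H.dom_dense in blast)+
qed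

end
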